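(* For every $(A,\lambda,v)\in\mathcal W$, \[ \frac{NJ_{\pi}(A,\lambda,v)}{NJ_{\pi_2}(A,\lambda,v)}=\frac12\,|\det(A_{\lambda,v})|^2 . \] In particular this quotient is invariant under the action $U\cdot(A,\lambda,v)=(UAU^{-1},\lambda,Uv)$ of the unitary group.
   Context: $\mathcal V=\{(A,\lambda,v)\in\mathbb C^{n\times n}\times\mathbb C\times\mathbb P(\mathbb C^n):(\lambda I_n-A)v=0\}$, a smooth submanifold with the Riemannian metric induced from the product of the Euclidean (Frobenius) metric on $\mathbb C^{n\times n}\times\mathbb C$ and the Fubini–Study metric on $\mathbb P(\mathbb C^n)$. $\pi(A,\lambda,v)=A$, $\pi_2(A,\lambda,v)=v$. $A_{\lambda,v}=\Pi_{v^\perp}(\lambda I_n-A)|_{v^\perp}$; $\mathcal W=\{(A,\lambda,v)\in\mathcal V:A_{\lambda,v}\text{ invertible}\}$. $NJ_f$ denotes the normal Jacobian of $f$: the absolute value of the determinant of $Df$ restricted to the orthogonal complement of its kernel. *)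

theory Defs
  imports "HOL-Analysis.Analysis"
begin

definition det_nat :: "nat \<Rightarrow> (nat \<Rightarrow> nat \<Rightarrow> 'a::comm_ring_1) \<Rightarrow> 'a" where
  "det_nat k M = (\<Sum>p | p permutes {..<k}. of_int (sign p) * (\<Prod>i<k. M i (p i)))"

definition cinner :: "complex^'n \<Rightarrow> complex^'n \<Rightarrow> complex" where
  "cinner x y = (\<Sum>i\<in>UNIV. x$i * cnj (y$i))"

definition perp :: "complex^'n \<Rightarrow> (complex^'n) set" where
  "perp v = {x. cinner x v = 0}"

definition proj_perp :: "complex^'n \<Rightarrow> complex^'n \<Rightarrow> complex^'n" where
  "proj_perp v x = x - (cinner x v / cinner v v) *s v"

definition cadjoint :: "complex^'n^'n \<Rightarrow> complex^'n^'n" where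
  "cadjoint U = (\<chi> i j. cnj (U$j$i))"

definition unitary :: "complex^'n^'n \<Rightarrow> bool" where
  "unitary U \<longleftrightarrow> U ** cadjoint U = mat 1 \<and> cadjoint U ** U = mat 1"

definition c_onb :: "(complex^'n) set \<Rightarrow> (complex^'n) list \<Rightarrow> bool" where
  "c_onb S us \<longleftrightarrow>
     (\<forall>i<length us. \<forall>j<length us. cinner (us!i) (us!j) = (if i = j then 1 else 0)) \<and>
     set us \<subseteq> S \<and>
     (\<forall>x\<in>S. \<exists>c. x = (\<Sum>i<length us. c i *s us!i))"

text \<open>complex determinant of a complex-linear operator B on a subspace S,
  computed in an orthonormal basis of S (the absolute value is basis independent)\<close>
definition det_on :: "(complex^'n \<Rightarrow> complex^'n) \<Rightarrow> (complex^'n) set \<Rightarrow> complex" where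
  "det_on B S = (let us = (SOME us. c_onb S us) in
      det_nat (length us) (\<lambda>i j. cinner (B (us!j)) (us!i)))"

text \<open>A_{lambda,v} = Pi_{v^perp} (lambda I - A) restricted to v^perp\<close>
definition A_lv :: "complex^'n^'n \<Rightarrow> complex \<Rightarrow> complex^'n \<Rightarrow> complex^'n \<Rightarrow> complex^'n" where
  "A_lv A l v x = proj_perp v ((mat l - A) *v x)"

definition r_onb :: "'a::real_inner set \<Rightarrow> 'a list \<Rightarrow> bool" where
  "r_onb S bs \<longleftrightarrow>
     (\<forall>i<length bs. \<forall>j<length bs. bs!i \<bullet> bs!j = (if i = j then 1 else 0)) \<and>
     set bs \<subseteq> S \<and>
     (\<forall>x\<in>S. \<exists>c. x = (\<Sum>i<length bs. c i *\<^sub>R bs!i))"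

text \<open>NJ_L on the tangent space S: absolute value of the determinant of L restricted to
  the orthogonal complement (inside S) of its kernel, computed via orthonormal bases,
  i.e. the square root of the Gram determinant of the images of an orthonormal basis.\<close>
definition normal_jacobian :: "('a::real_inner \<Rightarrow> 'b::real_inner) \<Rightarrow> 'a set \<Rightarrow> real" where
  "normal_jacobian L S =
     (let H = {x\<in>S. \<forall>y\<in>S. L y = 0 \<longrightarrow> x \<bullet> y = 0};
          bs = (SOME bs. r_onb H bs)
      in sqrt (det_nat (length bs) (\<lambda>i j. L (bs!i) \<bullet> L (bs!j))))"

text \<open>A point (A, lambda, [v]) of V, represented with a unit representative v.\<close>
definition in_V :: "complex^'n^'n \<Rightarrow> complex \<Rightarrow> complex^'n \<Rightarrow> bool" where
  "in_V A l v \<longleftrightarrow> norm v = 1 \<and> (mat l - A) *v v = 0"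

definition in_W :: "complex^'n^'n \<Rightarrow> complex \<Rightarrow> complex^'n \<Rightarrow> bool" where
  "in_W A l v \<longleftrightarrow> in_V A l v \<and> bij_betw (A_lv A l v) (perp v) (perp v)"

text \<open>Tangent space of V at (A, lambda, [v]) (v unit), with T_[v] P(C^n) identified
  isometrically (Fubini--Study) with v^perp carrying the real part of the Hermitian product.
  The real inner product on the product space is Frobenius + Euclidean + Fubini--Study.\<close>
definition tangent_V :: "complex^'n^'n \<Rightarrow> complex \<Rightarrow> complex^'n
     \<Rightarrow> ((complex^'n^'n) \<times> complex \<times> (complex^'n)) set" where
  "tangent_V A l v = {(dA, dl, dw). cinner dw v = 0 \<and>
        (mat dl - dA) *v v + (mat l - A) *v dw = 0}"

definition NJ_pi :: "complex^'n^'n \<Rightarrow> complex \<Rightarrow> complex^'n \<Rightarrow> real" where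
  "NJ_pi A l v = normal_jacobian (\<lambda>(dA, dl, dw). dA) (tangent_V A l v)"

definition NJ_pi2 :: "complex^'n^'n \<Rightarrow> complex \<Rightarrow> complex^'n \<Rightarrow> real" where
  "NJ_pi2 A l v = normal_jacobian (\<lambda>(dA, dl, dw). dw) (tangent_V A l v)"

end

(*
  At a point of W the derivative of pi is injective on the tangent space T of V (a tangent
  vector (0, e, w) forces A_{lambda,v} w = 0), while the kernel of D pi_2 consists of the fibre
  directions (E, e, 0) with E v = e v; its orthogonal complement in T is the image of v^perp
  under the horizontal lift d |-> (Y v^*, -beta/2, d), Y = A_{lambda,v} d + (beta/2) v,
  beta = <(lambda I - A) d, v>.  Both normal Jacobians are therefore quotients of Gram
  determinants, computed in the basis of T formed by the two eigenvalue directions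
  (e v v^*, e, 0), e in {1, i}, the horizontal lifts of a real orthonormal basis u_k, i u_k of
  v^perp, and the matrices z u_k^* annihilating v.  These three groups are mutually orthogonal,
  so with G the Gram determinant of the lifts one gets NJ_pi2 = 1/sqrt G, while the images under
  D pi have Gram determinant (det A_R)^2 = |det A_{lambda,v}|^4 against 4 G for the basis
  itself (A_R the real form of A_{lambda,v}); the quotient is |det A_{lambda,v}|^2 / 2.
  Conjugation by a unitary U maps an orthonormal basis of v^perp to one of (U v)^perp without
  changing the matrix of A_{lambda,v}, which gives the invariance.
*)

theory Submission
  imports Defs "Jordan_Normal_Form.Determinant"
begin

no_notation Matrix.scalar_prod (infix \<open>\<bullet>\<close> 70)

section \<open>Gram determinants and normal Jacobians\<close>

lemma det_nat_eq_det: "det_nat k M = det (Matrix.mat k k (\<lambda>(i,j). M i j))"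
proof -
  have "det (Matrix.mat k k (\<lambda>(i,j). M i j)) =
     (\<Sum>p\<in>{p. p permutes {0..<k}}. signof p * (\<Prod>i = 0..<k. Matrix.mat k k (\<lambda>(i,j). M i j) $$ (i, p i)))"
    by (rule det_def') auto
  also have "\<dots> = det_nat k M"
    unfolding det_nat_def
  proof (rule sum.cong)
    show "{p. p permutes {0..<k}} = {p. p permutes {..<k}}" by (simp add: lessThan_atLeast0)
  next
    fix p assume "p \<in> {p. p permutes {..<k}}"
    hence p: "p permutes {..<k}" by simp
    have "(\<Prod>i = 0..<k. Matrix.mat k k (\<lambda>(i,j). M i j) $$ (i, p i)) = (\<Prod>i<k. M i (p i))"
    proof (rule prod.cong)
      fix i assume "i \<in> {..<k}"
      moreover hence "p i < k" using permutes_in_image[OF p] by auto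
      ultimately show "Matrix.mat k k (\<lambda>(i,j). M i j) $$ (i, p i) = M i (p i)" by simp
    qed (simp add: lessThan_atLeast0)
    thus "signof p * (\<Prod>i = 0..<k. Matrix.mat k k (\<lambda>(i,j). M i j) $$ (i, p i))
        = of_int (sign p) * (\<Prod>i<k. M i (p i))"
      by simp
  qed
  finally show ?thesis by simp
qed

lemma mult_mat_index:
  assumes "A \<in> carrier_mat a b" "B \<in> carrier_mat b c" "i < a" "j < c"
  shows "(A * B) $$ (i,j) = (\<Sum>k<b. A $$ (i,k) * B $$ (k,j))"
  using assms by (simp add: scalar_prod_def lessThan_atLeast0)

lemma mult_mat_vec_index:
  assumes "A \<in> carrier_mat a b" "w \<in> carrier_vec b" "i < a"
  shows "(A *\<^sub>v w) $ i = (\<Sum>k<b. A $$ (i,k) * w $ k)"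
  using assms by (simp add: scalar_prod_def lessThan_atLeast0)

definition gram :: "'a::real_inner list \<Rightarrow> real mat" where
  "gram xs = Matrix.mat (length xs) (length xs) (\<lambda>(i,j). xs!i \<bullet> xs!j)"

lemma gram_carrier [simp]: "gram xs \<in> carrier_mat (length xs) (length xs)"
  by (simp add: gram_def)

definition orthonormal_list :: "'a::real_inner list \<Rightarrow> bool" where
  "orthonormal_list xs \<longleftrightarrow>
     (\<forall>i<length xs. \<forall>j<length xs. xs!i \<bullet> xs!j = (if i = j then 1 else 0))"

definition lin_indep_list :: "'a::real_vector list \<Rightarrow> bool" where
  "lin_indep_list xs \<longleftrightarrow> (\<forall>a. (\<Sum>i<length xs. a i *\<^sub>R xs!i) = 0 \<longrightarrow> (\<forall>i<length xs. a i = 0))"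

definition spans_list :: "'a::real_vector set \<Rightarrow> 'a list \<Rightarrow> bool" where
  "spans_list H xs \<longleftrightarrow> (\<forall>x\<in>H. \<exists>c. x = (\<Sum>i<length xs. c i *\<^sub>R xs!i))"

definition kernel_complement :: "('a::real_inner \<Rightarrow> 'b::real_vector) \<Rightarrow> 'a set \<Rightarrow> 'a set" where
  "kernel_complement L S = {x\<in>S. \<forall>y\<in>S. L y = 0 \<longrightarrow> x \<bullet> y = 0}"

lemma r_onb_iff: "r_onb H bs \<longleftrightarrow> orthonormal_list bs \<and> set bs \<subseteq> H \<and> spans_list H bs"
  unfolding r_onb_def orthonormal_list_def spans_list_def by blast

lemma gram_orthonormal_list: "orthonormal_list xs \<Longrightarrow> gram xs = 1\<^sub>m (length xs)"
  unfolding orthonormal_list_def gram_def by (intro eq_matI) auto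

lemma orthonormal_list_inner:
  assumes "orthonormal_list xs" "i < length xs" "j < length xs"
  shows "xs!i \<bullet> xs!j = (if i = j then 1 else 0)"
  using assms unfolding orthonormal_list_def by blast

lemma orthonormal_list_coeff:
  assumes "orthonormal_list bs" "x = (\<Sum>i<length bs. c i *\<^sub>R bs!i)" "k < length bs"
  shows "c k = x \<bullet> bs!k"
proof -
  have "x \<bullet> bs!k = (\<Sum>i<length bs. c i * (bs!i \<bullet> bs!k))"
    using assms(2) by (simp add: inner_sum_left)
  also have "\<dots> = (\<Sum>i<length bs. if i = k then c k else 0)"
    using assms(1,3) by (intro sum.cong) (auto simp: orthonormal_list_inner)
  finally show ?thesis using assms(3) by simp
qed

lemma orthonormal_list_expansion:
  assumes "orthonormal_list bs" "spans_list H bs" "x \<in> H"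
  shows "x = (\<Sum>i<length bs. (x \<bullet> bs!i) *\<^sub>R bs!i)"
proof -
  obtain c where c: "x = (\<Sum>i<length bs. c i *\<^sub>R bs!i)"
    using assms(2,3) unfolding spans_list_def by blast
  also have "\<dots> = (\<Sum>i<length bs. (x \<bullet> bs!i) *\<^sub>R bs!i)"
    using orthonormal_list_coeff[OF assms(1) c] by (intro sum.cong) auto
  finally show ?thesis .
qed

lemma orthonormal_list_expansion_nth:
  assumes "orthonormal_list bs" "spans_list H bs" "set cs \<subseteq> H" "j < length cs"
  shows "cs!j = (\<Sum>i<length bs. (cs!j \<bullet> bs!i) *\<^sub>R bs!i)"
  using orthonormal_list_expansion[OF assms(1,2)] assms(3,4) nth_mem by blast

lemma orthonormal_list_lin_indep: assumes "orthonormal_list xs" shows "lin_indep_list xs"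
  unfolding lin_indep_list_def
proof (intro allI impI)
  fix a k assume s: "(\<Sum>i<length xs. a i *\<^sub>R xs!i) = 0" and k: "k < length xs"
  have "a k = 0 \<bullet> xs!k" using orthonormal_list_coeff[OF assms s[symmetric] k] .
  thus "a k = 0" by simp
qed

lemma orthonormal_list_append:
  assumes "orthonormal_list xs" "orthonormal_list ys"
    and "\<And>i j. i < length xs \<Longrightarrow> j < length ys \<Longrightarrow> xs!i \<bullet> ys!j = 0"
  shows "orthonormal_list (xs @ ys)"
  unfolding orthonormal_list_def
proof (intro allI impI)
  fix i j assume ij: "i < length (xs@ys)" "j < length (xs@ys)"
  show "(xs@ys)!i \<bullet> (xs@ys)!j = (if i = j then 1 else 0)"
  proof (cases "i < length xs"; cases "j < length xs")
    assume "i < length xs" "j < length xs"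
    thus ?thesis using assms(1) by (simp add: nth_append orthonormal_list_inner)
  next
    assume "i < length xs" "\<not> j < length xs"
    thus ?thesis using assms(3)[of i "j - length xs"] ij by (simp add: nth_append)
  next
    assume "\<not> i < length xs" "j < length xs"
    thus ?thesis using assms(3)[of j "i - length xs"] ij by (simp add: nth_append inner_commute)
  next
    assume a: "\<not> i < length xs" "\<not> j < length xs"
    hence "(i - length xs = j - length xs) = (i = j)" by auto
    thus ?thesis using a ij assms(2) by (simp add: nth_append orthonormal_list_inner)
  qed
qed

lemma orthonormal_list_map:
  assumes "distinct ps" "\<And>p q. p \<in> set ps \<Longrightarrow> q \<in> set ps \<Longrightarrow> f p \<bullet> f q = (if p = q then 1 else 0)"
  shows "orthonormal_list (map f ps)"
  unfolding orthonormal_list_def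
proof (intro allI impI)
  fix i j assume ij: "i < length (map f ps)" "j < length (map f ps)"
  hence "(ps!i = ps!j) = (i = j)" using assms(1) nth_eq_iff_index_eq by auto
  thus "map f ps ! i \<bullet> map f ps ! j = (if i = j then 1 else 0)" using assms(2) ij by auto
qed

lemma lin_indep_listD:
  "lin_indep_list xs \<Longrightarrow> (\<Sum>i<length xs. a i *\<^sub>R xs!i) = 0 \<Longrightarrow> i < length xs \<Longrightarrow> a i = 0"
  unfolding lin_indep_list_def by blast

lemma lin_indep_list_distinct: assumes "lin_indep_list xs" shows "distinct xs"
proof (rule ccontr)
  assume "\<not> distinct xs"
  then obtain i j where ij: "i < length xs" "j < length xs" "i \<noteq> j" "xs!i = xs!j"
    by (metis distinct_conv_nth)
  define a where "a = (\<lambda>k. if k = i then (1::real) else if k = j then -1 else 0)"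
  have "(\<Sum>k<length xs. a k *\<^sub>R xs!k) = (\<Sum>k\<in>{i,j}. a k *\<^sub>R xs!k)"
    using ij by (intro sum.mono_neutral_right) (auto simp: a_def)
  also have "\<dots> = 0" using ij by (simp add: a_def)
  finally have "a i = 0" using assms ij lin_indep_listD by blast
  thus False by (simp add: a_def)
qed

lemma sum_set_distinct: "distinct xs \<Longrightarrow> sum f (set xs) = (\<Sum>i<length xs. f (xs!i))"
  by (simp add: sum.distinct_set_conv_list sum_list_sum_nth lessThan_atLeast0)

lemma lin_indep_list_independent: assumes "lin_indep_list xs" shows "independent (set xs)"
proof
  assume "dependent (set xs)"
  then obtain c v where s: "(\<Sum>v\<in>set xs. c v *\<^sub>R v) = 0" and v: "v \<in> set xs" "c v \<noteq> 0"
    using real_vector.dependent_finite[of "set xs"] by auto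
  have "(\<Sum>i<length xs. c (xs!i) *\<^sub>R xs!i) = 0"
    using s sum_set_distinct[OF lin_indep_list_distinct[OF assms], of "\<lambda>v. c v *\<^sub>R v"] by simp
  moreover obtain i where "i < length xs" "xs!i = v" using v(1) in_set_conv_nth by metis
  ultimately show False using lin_indep_listD[OF assms, of "\<lambda>i. c (xs!i)"] v(2) by auto
qed

lemma spans_list_subset_span: "spans_list H xs \<Longrightarrow> H \<subseteq> span (set xs)"
proof
  fix x assume "spans_list H xs" "x \<in> H"
  then obtain c where c: "x = (\<Sum>i<length xs. c i *\<^sub>R xs!i)" unfolding spans_list_def by blast
  have "(\<Sum>i<length xs. c i *\<^sub>R xs!i) \<in> span (set xs)" by (intro span_sum span_scale span_base) auto
  thus "x \<in> span (set xs)" using c by simp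
qed

lemma dim_eq_length_lin_indep_list:
  assumes "lin_indep_list xs" "set xs \<subseteq> H" "H \<subseteq> span (set xs)"
  shows "dim H = length xs"
  using dim_unique[OF assms(2,3) lin_indep_list_independent[OF assms(1)]]
    distinct_card[OF lin_indep_list_distinct[OF assms(1)]] by simp

lemma r_onb_length: assumes "r_onb H bs" shows "length bs = dim H"
proof -
  have o: "orthonormal_list bs" and s: "set bs \<subseteq> H" and sp: "spans_list H bs"
    using assms unfolding r_onb_iff by auto
  show ?thesis
    using dim_eq_length_lin_indep_list[OF orthonormal_list_lin_indep[OF o] s spans_list_subset_span[OF sp]]
    by simp
qed

lemma lin_indep_list_map_imp:
  assumes "linear L" "lin_indep_list (map L xs)"
  shows "lin_indep_list xs"
  unfolding lin_indep_list_def
proof (intro allI impI)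
  fix a k assume s: "(\<Sum>i<length xs. a i *\<^sub>R xs!i) = 0" and k: "k < length xs"
  have "(\<Sum>i<length xs. a i *\<^sub>R (map L xs)!i) = L (\<Sum>i<length xs. a i *\<^sub>R xs!i)"
    using assms(1) by (simp add: linear_sum linear_scale)
  also have "\<dots> = 0" using s assms(1) linear_0 by auto
  finally show "a k = 0" using assms(2) k lin_indep_listD by fastforce
qed

lemma lin_indep_list_map:
  assumes "linear L" "subspace S" "set xs \<subseteq> S" "\<And>x. x \<in> S \<Longrightarrow> L x = 0 \<Longrightarrow> x = 0"
    and "lin_indep_list xs"
  shows "lin_indep_list (map L xs)"
  unfolding lin_indep_list_def
proof (intro allI impI)
  fix a k assume s: "(\<Sum>i<length (map L xs). a i *\<^sub>R map L xs!i) = 0" and k: "k < length (map L xs)"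
  have "L (\<Sum>i<length xs. a i *\<^sub>R xs!i) = (\<Sum>i<length xs. a i *\<^sub>R map L xs!i)"
    using assms(1) by (simp add: linear_sum linear_scale)
  moreover have "(\<Sum>i<length xs. a i *\<^sub>R xs!i) \<in> S"
    using assms(2,3) by (intro subspace_sum subspace_scale) auto
  ultimately have "(\<Sum>i<length xs. a i *\<^sub>R xs!i) = 0" using assms(4) s by simp
  thus "a k = 0" using assms(5) k lin_indep_listD by fastforce
qed

lemma r_onb_exists:
  fixes H :: "'a::euclidean_space set"
  assumes "subspace H" shows "\<exists>bs. r_onb H bs"
proof -
  obtain B where B: "B \<subseteq> H" "pairwise real_inner_class.orthogonal B" "\<And>x. x \<in> B \<Longrightarrow> norm x = 1"
    "independent B" "span B = H"
    using orthonormal_basis_subspace[OF assms] by metis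
  obtain xs where xs: "set xs = B" "distinct xs"
    using finite_distinct_list[OF independent_imp_finite[OF B(4)]] by blast
  have "orthonormal_list xs"
  proof (rule orthonormal_list_map[where f = id, simplified, OF xs(2)])
    fix p q assume "p \<in> set xs" "q \<in> set xs"
    thus "p \<bullet> q = (if p = q then 1 else 0)"
      using B(2,3) xs(1) unfolding pairwise_def real_inner_class.orthogonal_def by (auto simp: dot_square_norm)
  qed
  moreover have "spans_list H xs" unfolding spans_list_def
  proof
    fix x assume "x \<in> H"
    then obtain u where "x = (\<Sum>v\<in>B. u v *\<^sub>R v)"
      using B(4,5) span_finite[OF independent_imp_finite] by blast
    hence "x = (\<Sum>i<length xs. u (xs!i) *\<^sub>R xs!i)"
      unfolding xs(1)[symmetric] sum_set_distinct[OF xs(2)] .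
    thus "\<exists>c. x = (\<Sum>i<length xs. c i *\<^sub>R xs!i)" by (rule exI[of _ "\<lambda>i. u (xs!i)"])
  qed
  ultimately show ?thesis using B(1) xs(1) unfolding r_onb_iff by blast
qed

lemma linear_image_subset_span_map:
  assumes "linear L" "spans_list S xs"
  shows "L ` S \<subseteq> span (set (map L xs))"
proof
  fix y assume "y \<in> L ` S"
  then obtain x c where "y = L x" "x = (\<Sum>i<length xs. c i *\<^sub>R xs!i)"
    using assms(2) unfolding spans_list_def by blast
  hence "y = (\<Sum>i<length xs. c i *\<^sub>R L (xs!i))" using assms(1) by (simp add: linear_sum linear_scale)
  also have "\<dots> \<in> span (set (map L xs))" by (intro span_sum span_scale span_base) auto
  finally show "y \<in> span (set (map L xs))" .
qed

definition coeff_mat :: "'a::real_inner list \<Rightarrow> 'a list \<Rightarrow> real mat" where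
  "coeff_mat bs cs = Matrix.mat (length bs) (length cs) (\<lambda>(i,j). cs!j \<bullet> bs!i)"

lemma gram_map_change_of_basis:
  fixes L :: "'a::real_inner \<Rightarrow> 'b::real_inner"
  assumes bs: "orthonormal_list bs" "spans_list H bs" and cs: "set cs \<subseteq> H" "length cs = length bs"
    and L: "linear L"
  shows "gram (map L cs) = transpose_mat (coeff_mat bs cs) * gram (map L bs) * coeff_mat bs cs"
    (is "_ = transpose_mat ?C * ?G * ?C")
proof (rule eq_matI)
  let ?m = "length bs"
  have Cc: "?C \<in> carrier_mat ?m ?m" using cs(2) by (simp add: coeff_mat_def)
  have Gc: "?G \<in> carrier_mat ?m ?m" using gram_carrier[of "map L bs"] by simp
  have CTc: "transpose_mat ?C \<in> carrier_mat ?m ?m" using Cc by simp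
  have CG: "transpose_mat ?C * ?G \<in> carrier_mat ?m ?m" using mult_carrier_mat[OF CTc Gc] .
  fix j k assume "j < dim_row (transpose_mat ?C * ?G * ?C)" "k < dim_col (transpose_mat ?C * ?G * ?C)"
  hence j: "j < ?m" and k: "k < ?m" using Cc by auto
  have Lc: "L (cs!j) = (\<Sum>i<?m. (cs!j \<bullet> bs!i) *\<^sub>R L (bs!i))" if "j < ?m" for j
  proof -
    have "cs!j = (\<Sum>i<?m. (cs!j \<bullet> bs!i) *\<^sub>R bs!i)"
      by (rule orthonormal_list_expansion_nth[OF bs cs(1)]) (use that cs(2) in simp)
    hence "L (cs!j) = L (\<Sum>i<?m. (cs!j \<bullet> bs!i) *\<^sub>R bs!i)" by (rule arg_cong)
    thus ?thesis using L by (simp add: linear_sum linear_scale)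
  qed
  have "gram (map L cs) $$ (j,k) = L (cs!j) \<bullet> L (cs!k)"
    using j k cs(2) by (simp add: gram_def)
  also have "\<dots> = (\<Sum>i'<?m. (\<Sum>i<?m. (cs!j \<bullet> bs!i) * (L (bs!i) \<bullet> L (bs!i'))) * (cs!k \<bullet> bs!i'))"
    unfolding Lc[OF j] Lc[OF k]
    by (simp add: inner_sum_left inner_sum_right sum_distrib_left sum_distrib_right mult_ac)
  also have "\<dots> = (\<Sum>i'<?m. (transpose_mat ?C * ?G) $$ (j,i') * ?C $$ (i',k))"
  proof (rule sum.cong)
    fix i' assume "i' \<in> {..<?m}"
    hence i': "i' < ?m" by simp
    show "(\<Sum>i<?m. (cs!j \<bullet> bs!i) * (L (bs!i) \<bullet> L (bs!i'))) * (cs!k \<bullet> bs!i')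
        = (transpose_mat ?C * ?G) $$ (j,i') * ?C $$ (i',k)"
      unfolding mult_mat_index[OF CTc Gc j i'] using j k i' cs(2) by (simp add: gram_def coeff_mat_def)
  qed simp
  also have "\<dots> = (transpose_mat ?C * ?G * ?C) $$ (j,k)"
    by (rule mult_mat_index[OF CG Cc j k, symmetric])
  finally show "gram (map L cs) $$ (j,k) = (transpose_mat ?C * ?G * ?C) $$ (j,k)" .
qed (use cs(2) in \<open>auto simp: gram_def coeff_mat_def\<close>)

lemma det_gram_map_change_of_basis:
  fixes L :: "'a::real_inner \<Rightarrow> 'b::real_inner"
  assumes "orthonormal_list bs" "spans_list H bs" "set cs \<subseteq> H" "length cs = length bs" "linear L"
  shows "det (gram (map L cs)) = (det (coeff_mat bs cs))^2 * det (gram (map L bs))"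
proof -
  have Cc: "coeff_mat bs cs \<in> carrier_mat (length bs) (length bs)"
    using assms(4) by (simp add: coeff_mat_def)
  show ?thesis
    unfolding gram_map_change_of_basis[OF assms] using Cc gram_carrier[of "map L bs"]
    by (simp add: det_mult[of _ "length bs"] det_transpose power2_eq_square)
qed

lemma det_gram_change_of_basis:
  assumes "orthonormal_list bs" "spans_list H bs" "set cs \<subseteq> H" "length cs = length bs"
  shows "det (gram cs) = (det (coeff_mat bs cs))^2"
  using det_gram_map_change_of_basis[OF assms linear_id]
  by (simp add: gram_orthonormal_list[OF assms(1)])

lemma det_coeff_mat_nonzero:
  assumes bs: "orthonormal_list bs" "spans_list H bs"
    and cs: "set cs \<subseteq> H" "length cs = length bs" "lin_indep_list cs"
  shows "det (coeff_mat bs cs) \<noteq> 0"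
proof
  let ?m = "length bs" and ?C = "coeff_mat bs cs"
  have Cc: "?C \<in> carrier_mat ?m ?m" using cs(2) by (simp add: coeff_mat_def)
  assume "det ?C = 0"
  then obtain w where w: "w \<in> carrier_vec ?m" "w \<noteq> 0\<^sub>v ?m" "?C *\<^sub>v w = 0\<^sub>v ?m"
    using det_0_iff_vec_prod_zero_field[OF Cc] by blast
  have "(\<Sum>j<length cs. (w $ j) *\<^sub>R cs!j) = (\<Sum>j<?m. (w $ j) *\<^sub>R (\<Sum>i<?m. (cs!j \<bullet> bs!i) *\<^sub>R bs!i))"
  proof (rule sum.cong)
    fix j assume "j \<in> {..<?m}"
    hence "cs!j = (\<Sum>i<?m. (cs!j \<bullet> bs!i) *\<^sub>R bs!i)"
      by (intro orthonormal_list_expansion_nth[OF bs cs(1)]) (simp add: cs(2))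
    thus "(w $ j) *\<^sub>R cs!j = (w $ j) *\<^sub>R (\<Sum>i<?m. (cs!j \<bullet> bs!i) *\<^sub>R bs!i)" by (rule arg_cong)
  qed (simp add: cs(2))
  also have "\<dots> = (\<Sum>i<?m. (\<Sum>j<?m. ?C $$ (i,j) * w $ j) *\<^sub>R bs!i)"
    unfolding scaleR_sum_right scaleR_scaleR
    by (subst sum.swap) (simp add: scaleR_sum_left coeff_mat_def cs(2) mult.commute)
  also have "\<dots> = (\<Sum>i<?m. (?C *\<^sub>v w) $ i *\<^sub>R bs!i)"
    by (intro sum.cong refl) (simp add: mult_mat_vec_index[OF Cc w(1)])
  also have "\<dots> = 0" using w(3) by simp
  finally have "\<forall>j<?m. w $ j = 0" using lin_indep_listD[OF cs(3)] cs(2) by metis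
  hence "w = 0\<^sub>v ?m" using w(1) by (intro eq_vecI) auto
  thus False using w(2) by simp
qed

lemma lin_indep_list_if_det_gram_nonzero:
  assumes "det (gram xs) \<noteq> 0" shows "lin_indep_list xs"
  unfolding lin_indep_list_def
proof (intro allI impI)
  fix a k assume s: "(\<Sum>i<length xs. a i *\<^sub>R xs!i) = 0" and k: "k < length xs"
  let ?n = "length xs"
  define w where "w = Matrix.vec ?n a"
  have "gram xs *\<^sub>v w = 0\<^sub>v ?n"
  proof (rule eq_vecI)
    fix j assume "j < dim_vec (0\<^sub>v ?n :: real Matrix.vec)"
    hence j: "j < ?n" by simp
    have "(gram xs *\<^sub>v w) $ j = (\<Sum>i<?n. gram xs $$ (j,i) * w $ i)"
      by (rule mult_mat_vec_index[OF gram_carrier _ j]) (simp add: w_def)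
    also have "\<dots> = xs!j \<bullet> (\<Sum>i<?n. a i *\<^sub>R xs!i)"
      using j by (simp add: gram_def w_def inner_sum_right mult.commute)
    finally have "(gram xs *\<^sub>v w) $ j = xs!j \<bullet> (\<Sum>i<?n. a i *\<^sub>R xs!i)" .
    thus "(gram xs *\<^sub>v w) $ j = 0\<^sub>v ?n $ j" using j s by simp
  qed (simp add: gram_def)
  hence "w = 0\<^sub>v ?n"
    using det_0_iff_vec_prod_zero_field[OF gram_carrier[of xs]] assms unfolding w_def
    by (metis vec_carrier)
  thus "a k = 0" using k unfolding w_def by (metis index_vec index_zero_vec(1))
qed

lemma subspace_kernel_complement:
  assumes "subspace S" shows "subspace (kernel_complement L S)"
  using assms unfolding subspace_def kernel_complement_def by (auto simp: inner_add_left)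

lemma normal_jacobian_eq_gram:
  fixes L :: "'a::euclidean_space \<Rightarrow> 'b::real_inner"
  assumes L: "linear L" and S: "subspace S"
    and cs: "set cs \<subseteq> kernel_complement L S" "kernel_complement L S \<subseteq> span (set cs)"
      "lin_indep_list cs"
  shows "det (gram cs) > 0"
    and "normal_jacobian L S = sqrt (det (gram (map L cs)) / det (gram cs))"
proof -
  let ?H = "kernel_complement L S"
  define bs where "bs = (SOME bs. r_onb ?H bs)"
  have rb: "r_onb ?H bs"
    unfolding bs_def using r_onb_exists[OF subspace_kernel_complement[OF S]] by (rule someI_ex)
  hence bs: "orthonormal_list bs" "spans_list ?H bs" unfolding r_onb_iff by auto
  have len: "length cs = length bs"
    using dim_eq_length_lin_indep_list[OF cs(3,1,2)] r_onb_length[OF rb] by simp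
  have C: "det (coeff_mat bs cs) \<noteq> 0" by (rule det_coeff_mat_nonzero[OF bs cs(1) len cs(3)])
  have G: "det (gram cs) = (det (coeff_mat bs cs))^2"
    by (rule det_gram_change_of_basis[OF bs cs(1) len])
  show "det (gram cs) > 0" using C G by simp
  have "normal_jacobian L S = sqrt (det (gram (map L bs)))"
    unfolding normal_jacobian_def kernel_complement_def[symmetric] bs_def[symmetric] Let_def
      det_nat_eq_det gram_def
    by (intro arg_cong[where f = "\<lambda>M. sqrt (det M)"] eq_matI) auto
  also have "det (gram (map L bs)) = det (gram (map L cs)) / det (gram cs)"
    using det_gram_map_change_of_basis[OF bs cs(1) len L] C G by simp
  finally show "normal_jacobian L S = sqrt (det (gram (map L cs)) / det (gram cs))" .
qed

lemma det_gram_append_orthogonal: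
  assumes "\<And>x y. x \<in> set xs \<Longrightarrow> y \<in> set ys \<Longrightarrow> x \<bullet> y = 0"
  shows "det (gram (xs @ ys)) = det (gram xs) * det (gram ys)"
proof -
  let ?B = "four_block_mat (gram xs) (0\<^sub>m (length xs) (length ys)) (0\<^sub>m (length ys) (length xs)) (gram ys)"
  have "gram (xs @ ys) = ?B"
  proof (rule eq_matI)
    fix i j assume "i < dim_row ?B" "j < dim_col ?B"
    hence ij: "i < length xs + length ys" "j < length xs + length ys" by (auto simp: gram_def)
    show "gram (xs @ ys) $$ (i, j) = ?B $$ (i, j)"
      using ij assms[of "xs!i" "ys!(j - length xs)"] assms[of "xs!j" "ys!(i - length xs)"]
      by (auto simp: gram_def nth_append inner_commute)
  qed (auto simp: gram_def)
  thus ?thesis by (simp add: det_four_block_mat_lower_left_zero[of _ "length xs" _ "length ys"])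
qed

section \<open>The Hermitian product and rank-one matrices\<close>

lemma inner_eq_Re_cinner: "x \<bullet> y = Re (cinner x y)"
  unfolding inner_vec_def cinner_def inner_complex_def by (simp add: Re_sum)

lemma inner_complex_eq_Re: "(a::complex) \<bullet> b = Re (a * cnj b)"
  by (simp add: inner_complex_def)

lemma vector_scaleR_nth: "(r *\<^sub>R x) $ i = of_real r * (x $ i :: complex)"
  by (simp only: vector_scaleR_component) (simp add: scaleR_conv_of_real)

lemma cinner_add_left: "cinner (x + y) z = cinner x z + cinner y z"
  unfolding cinner_def by (simp add: distrib_right sum.distrib)

lemma cinner_diff_left: "cinner (x - y) z = cinner x z - cinner y z"
  unfolding cinner_def by (simp add: left_diff_distrib sum_subtractf)

lemma cinner_scale_left: "cinner (c *s x) z = c * cinner x z"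
  unfolding cinner_def by (simp add: sum_distrib_left mult.assoc)

lemma cinner_scale_right: "cinner z (c *s x) = cnj c * cinner z x"
  unfolding cinner_def by (simp add: sum_distrib_left mult_ac)

lemma cinner_scaleR_left: "cinner (r *\<^sub>R x) z = of_real r * cinner x z"
  unfolding cinner_def vector_scaleR_nth by (simp add: sum_distrib_left mult.assoc)

lemma cinner_zero_left [simp]: "cinner 0 z = 0"
  unfolding cinner_def by simp

lemma cinner_zero_right [simp]: "cinner z 0 = 0"
  unfolding cinner_def by simp

lemma cinner_commute: "cinner y x = cnj (cinner x y)"
  unfolding cinner_def by (simp add: mult.commute)

lemma cinner_sum_left: "cinner (\<Sum>i\<in>I. f i) z = (\<Sum>i\<in>I. cinner (f i) z)"
  unfolding cinner_def by (simp add: sum_distrib_right sum.swap[of _ I])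

lemma cinner_self: "cinner x x = of_real ((norm x)^2)"
proof -
  have "Im (cinner x x) = 0" unfolding cinner_def by (simp add: Im_sum)
  moreover have "Re (cinner x x) = (norm x)^2"
    using inner_eq_Re_cinner[of x x] by (simp add: power2_norm_eq_inner)
  ultimately show ?thesis by (simp add: complex_eq_iff)
qed

lemma vector_scale_eq_scaleR: "e *s (x::complex^'n) = Re e *\<^sub>R x + Im e *\<^sub>R (\<i> *s x)"
  by (simp add: Finite_Cartesian_Product.vec_eq_iff vector_scaleR_nth complex_eq_iff algebra_simps)

lemma vector_scale_of_real: "(r *\<^sub>R c) *s (x::complex^'n) = r *\<^sub>R (c *s x)"
  by (simp add: Finite_Cartesian_Product.vec_eq_iff vector_scaleR_nth scaleR_conv_of_real[where 'a = complex] mult.assoc)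

lemma mat_mult_vec: "Finite_Cartesian_Product.mat c *v x = c *s (x :: complex^'n)"
  unfolding matrix_vector_mult_def Finite_Cartesian_Product.mat_def
  by (simp add: Finite_Cartesian_Product.vec_eq_iff if_distrib if_distribR cong: if_cong)

lemma matrix_vector_mult_scaleR_left: "(r *\<^sub>R (M::complex^'n^'m)) *v x = r *\<^sub>R (M *v x)"
  unfolding matrix_vector_mult_def
  by (simp add: Finite_Cartesian_Product.vec_eq_iff scaleR_conv_of_real[where 'a = complex] sum_distrib_left mult_ac)

lemma matrix_vector_mult_sum_left: "(\<Sum>i\<in>I. f i) *v (x::complex^'n) = (\<Sum>i\<in>I. f i *v x)"
  by (induction I rule: infinite_finite_induct) (auto simp: matrix_vector_mult_add_rdistrib)

lemma cadjoint_cadjoint: "cadjoint (cadjoint M) = M"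
  unfolding cadjoint_def by (simp add: Finite_Cartesian_Product.vec_eq_iff)

lemma cinner_cadjoint: "cinner (M *v x) y = cinner x (cadjoint M *v y)"
  unfolding cinner_def matrix_vector_mult_def cadjoint_def
  by (simp add: sum_distrib_left sum_distrib_right, subst sum.swap, simp add: mult_ac)

definition outer :: "complex^'n \<Rightarrow> complex^'n \<Rightarrow> complex^'n^'n" where
  "outer y w = (\<chi> i j. y$i * cnj (w$j))"

lemma outer_mult_vec: "outer y w *v x = cinner x w *s y"
  unfolding outer_def matrix_vector_mult_def cinner_def
  by (simp add: Finite_Cartesian_Product.vec_eq_iff sum_distrib_left mult_ac)

lemma inner_outer_left: "outer y w \<bullet> Z = Re (cinner y (Z *v w))"
proof -
  have "outer y w \<bullet> Z = Re (\<Sum>i\<in>UNIV. cinner (outer y w $ i) (Z $ i))"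
    by (simp only: inner_vec_def[of "outer y w" Z] inner_eq_Re_cinner Re_sum)
  also have "(\<Sum>i\<in>UNIV. cinner (outer y w $ i) (Z $ i)) = cinner y (Z *v w)"
    unfolding outer_def cinner_def matrix_vector_mult_def by (simp add: sum_distrib_left mult_ac)
  finally show ?thesis .
qed

lemma inner_outer_right: "Z \<bullet> outer y w = Re (cinner y (Z *v w))"
  by (subst inner_commute) (rule inner_outer_left)

lemma inner_outer_outer: "outer y w \<bullet> outer y' w' = Re (cinner w' w * cinner y y')"
  by (simp add: inner_outer_left outer_mult_vec cinner_scale_right cinner_commute[of w w'])

lemma outer_add_left: "outer (x + y) w = outer x w + outer y w"
  unfolding outer_def by (vector distrib_right)

lemma outer_diff_left: "outer (x - y) w = outer x w - outer y w"
  unfolding outer_def by (vector left_diff_distrib)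

lemma outer_scaleR_left: "outer (r *\<^sub>R x) w = r *\<^sub>R outer x w"
  unfolding outer_def by (vector vector_scaleR_nth mult.assoc)

lemma outer_zero_left [simp]: "outer 0 w = 0"
  unfolding outer_def by vector

lemma outer_sum_left: "outer (\<Sum>i\<in>I. f i) w = (\<Sum>i\<in>I. outer (f i) w)"
  by (induction I rule: infinite_finite_induct) (auto simp: outer_add_left)

section \<open>Complex orthonormal bases and realification\<close>

definition complex_subspace :: "(complex^'n) set \<Rightarrow> bool" where
  "complex_subspace S \<longleftrightarrow> subspace S \<and> (\<forall>x\<in>S. \<forall>c. c *s x \<in> S)"

lemma subspace_perp: "subspace (perp v)"
  unfolding perp_def subspace_def by (auto simp: cinner_add_left cinner_scaleR_left)

lemma complex_subspace_perp: "complex_subspace (perp v)"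
  unfolding complex_subspace_def perp_def subspace_def
  by (auto simp: cinner_add_left cinner_scaleR_left cinner_scale_left)

lemma c_onb_Cons:
  assumes S: "complex_subspace S" and u: "u \<in> S" "cinner u u = 1"
    and us: "c_onb {y\<in>S. cinner y u = 0} us"
  shows "c_onb S (u # us)"
  unfolding c_onb_def
proof (intro conjI allI impI ballI)
  have orth: "cinner (us!k) u = 0" "cinner u (us!k) = 0" if "k < length us" for k
  proof -
    show "cinner (us!k) u = 0" using us that unfolding c_onb_def by (auto dest!: nth_mem)
    thus "cinner u (us!k) = 0" by (subst cinner_commute) simp
  qed
  fix i j assume ij: "i < length (u # us)" "j < length (u # us)"
  show "cinner ((u # us)!i) ((u # us)!j) = (if i = j then 1 else 0)"
    using ij u(2) orth us unfolding c_onb_def by (cases i; cases j) auto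
next
  show "set (u # us) \<subseteq> S" using u us unfolding c_onb_def by auto
next
  fix y assume y: "y \<in> S"
  define y' where "y' = y - cinner y u *s u"
  have "y' \<in> S" using y u S unfolding y'_def complex_subspace_def by (simp add: subspace_diff)
  moreover have "cinner y' u = 0" unfolding y'_def by (simp add: cinner_diff_left cinner_scale_left u(2))
  ultimately obtain c where c: "y' = (\<Sum>i<length us. c i *s us!i)" using us unfolding c_onb_def by blast
  define c' where "c' = (\<lambda>i. case i of 0 \<Rightarrow> cinner y u | Suc k \<Rightarrow> c k)"
  have "(\<Sum>i<length (u # us). c' i *s (u # us)!i) = cinner y u *s u + y'"
    unfolding c by (simp add: sum.lessThan_Suc_shift c'_def del: sum.lessThan_Suc)
  also have "\<dots> = y" unfolding y'_def by simp
  finally show "\<exists>c. y = (\<Sum>i<length (u # us). c i *s (u # us)!i)" by (intro exI[of _ c']) simp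
qed

lemma c_onb_exists: "complex_subspace S \<Longrightarrow> \<exists>us. c_onb S us"
proof (induction "dim S" arbitrary: S rule: less_induct)
  case less
  show ?case
  proof (cases "S \<subseteq> {0}")
    case True
    hence "c_onb S []" unfolding c_onb_def by auto
    thus ?thesis by blast
  next
    case False
    then obtain x where x: "x \<in> S" "x \<noteq> 0" by blast
    define u where "u = of_real (1 / norm x) *s x"
    have uS: "u \<in> S" using less.prems x unfolding complex_subspace_def u_def by blast
    have "cinner u u = of_real (1 / norm x) * cnj (of_real (1 / norm x)) * cinner x x"
      unfolding u_def by (simp add: cinner_scale_left cinner_scale_right mult.assoc)
    hence uu: "cinner u u = 1" using x(2) by (simp add: cinner_self power2_eq_square)
    define S' where "S' = {y\<in>S. cinner y u = 0}"
    have cS': "complex_subspace S'" using less.prems unfolding complex_subspace_def S'_def subspace_def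
      by (auto simp: cinner_add_left cinner_scaleR_left cinner_scale_left)
    have "u \<notin> S'" using uu unfolding S'_def by simp
    hence "S' \<subset> S" using uS unfolding S'_def by blast
    moreover have "span S' = S'" "span S = S"
      using cS' less.prems unfolding complex_subspace_def by (simp_all add: span_eq_iff)
    ultimately have "dim S' < dim S" by (metis dim_psubset)
    then obtain us' where "c_onb S' us'" using less.hyps cS' by blast
    thus ?thesis using c_onb_Cons[OF less.prems uS uu] unfolding S'_def by blast
  qed
qed

lemma c_onb_cinner:
  "c_onb S us \<Longrightarrow> i < length us \<Longrightarrow> j < length us \<Longrightarrow> cinner (us!i) (us!j) = (if i = j then 1 else 0)"
  unfolding c_onb_def by blast

lemma c_onb_distinct: assumes "c_onb S us" shows "distinct us"
  unfolding distinct_conv_nth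
proof (intro allI impI)
  fix i j assume "i < length us" "j < length us" "i \<noteq> j"
  hence "cinner (us!i) (us!j) = 0" "cinner (us!i) (us!i) = 1" using c_onb_cinner[OF assms] by auto
  thus "us!i \<noteq> us!j" by auto
qed

lemma c_onb_cinner_mem:
  assumes "c_onb S us" "u \<in> set us" "u' \<in> set us"
  shows "cinner u u' = (if u = u' then 1 else 0)"
proof -
  obtain i j where ij: "i < length us" "j < length us" "u = us!i" "u' = us!j"
    using assms(2,3) by (metis in_set_conv_nth)
  moreover have "(us!i = us!j) = (i = j)" using c_onb_distinct[OF assms(1)] ij nth_eq_iff_index_eq by blast
  ultimately show ?thesis using c_onb_cinner[OF assms(1)] by auto
qed

lemma c_onb_expansion:
  assumes "c_onb S us" "x \<in> S"
  shows "x = (\<Sum>k<length us. cinner x (us!k) *s us!k)"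
proof -
  obtain c where c: "x = (\<Sum>k<length us. c k *s us!k)" using assms unfolding c_onb_def by blast
  have "cinner x (us!j) = c j" if j: "j < length us" for j
  proof -
    have "cinner x (us!j) = (\<Sum>k<length us. c k * cinner (us!k) (us!j))"
      unfolding c by (simp add: cinner_sum_left cinner_scale_left)
    also have "\<dots> = (\<Sum>k<length us. if k = j then c j else 0)"
      using c_onb_cinner[OF assms(1) _ j] by (intro sum.cong) auto
    finally show ?thesis using j by simp
  qed
  thus ?thesis using c by (metis (no_types, lifting) lessThan_iff sum.cong)
qed

lemma sum_lessThan_add: fixes a b :: nat shows "(\<Sum>i<a+b. f i) = (\<Sum>i<a. f i) + (\<Sum>i<b. f (a+i))"
  by (induction b) (auto simp: add.assoc)

lemma spans_list_append:
  assumes "\<And>x. x \<in> S \<Longrightarrow> \<exists>a b. x = (\<Sum>i<length xs. a i *\<^sub>R xs!i) + (\<Sum>i<length ys. b i *\<^sub>R ys!i)"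
  shows "spans_list S (xs @ ys)"
  unfolding spans_list_def
proof
  fix x assume "x \<in> S"
  then obtain a b where "x = (\<Sum>i<length xs. a i *\<^sub>R xs!i) + (\<Sum>i<length ys. b i *\<^sub>R ys!i)"
    using assms by blast
  hence "x = (\<Sum>i<length (xs@ys). (if i < length xs then a i else b (i - length xs)) *\<^sub>R (xs@ys)!i)"
    by (simp add: sum_lessThan_add nth_append)
  thus "\<exists>c. x = (\<Sum>i<length (xs@ys). c i *\<^sub>R (xs@ys)!i)"
    by (rule exI[of _ "\<lambda>i. if i < length xs then a i else b (i - length xs)"])
qed

lemma r_onb_realify:
  assumes "c_onb S us" "complex_subspace S"
  shows "r_onb S (us @ map (\<lambda>u. \<i> *s u) us)"
proof -
  note cu = c_onb_cinner[OF assms(1)]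
  have "orthonormal_list us" "orthonormal_list (map (\<lambda>u. \<i> *s u) us)"
    unfolding orthonormal_list_def using cu
    by (simp_all add: inner_eq_Re_cinner cinner_scale_left cinner_scale_right)
  hence "orthonormal_list (us @ map (\<lambda>u. \<i> *s u) us)"
    by (rule orthonormal_list_append) (simp add: inner_eq_Re_cinner cinner_scale_right cu)
  moreover have "set (us @ map (\<lambda>u. \<i> *s u) us) \<subseteq> S"
    using assms unfolding c_onb_def complex_subspace_def by auto
  moreover have "spans_list S (us @ map (\<lambda>u. \<i> *s u) us)"
  proof (rule spans_list_append)
    fix x assume "x \<in> S"
    then obtain c where c: "x = (\<Sum>i<length us. c i *s us!i)"
      using assms(1) unfolding c_onb_def by blast
    have "\<And>i. c i *s us!i = Re (c i) *\<^sub>R us!i + Im (c i) *\<^sub>R (\<i> *s us!i)"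
      by (rule vector_scale_eq_scaleR)
    hence "x = (\<Sum>i<length us. Re (c i) *\<^sub>R us!i)
        + (\<Sum>i<length (map (\<lambda>u. \<i> *s u) us). Im (c i) *\<^sub>R (map (\<lambda>u. \<i> *s u) us)!i)"
      unfolding c by (simp add: sum.distrib)
    thus "\<exists>a b. x = (\<Sum>i<length us. a i *\<^sub>R us!i)
        + (\<Sum>i<length (map (\<lambda>u. \<i> *s u) us). b i *\<^sub>R (map (\<lambda>u. \<i> *s u) us)!i)"
      by (intro exI)
  qed
  ultimately show ?thesis unfolding r_onb_iff by blast
qed

definition realify_mat :: "complex mat \<Rightarrow> real mat" where
  "realify_mat M = four_block_mat (map_mat Re M) (- map_mat Im M) (map_mat Im M) (map_mat Re M)"

lemma realify_mat_similar_block_triangular: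
  fixes M :: "complex mat"
  assumes M: "M \<in> carrier_mat m m"
  shows "four_block_mat (1\<^sub>m m) (\<i> \<cdot>\<^sub>m 1\<^sub>m m) (0\<^sub>m m m) (1\<^sub>m m) * map_mat complex_of_real (realify_mat M)
      * four_block_mat (1\<^sub>m m) ((- \<i>) \<cdot>\<^sub>m 1\<^sub>m m) (0\<^sub>m m m) (1\<^sub>m m)
    = four_block_mat M (0\<^sub>m m m) (map_mat complex_of_real (map_mat Im M)) (map_mat cnj M)"
proof -
  let ?I = "1\<^sub>m m :: complex mat" and ?Z = "0\<^sub>m m m :: complex mat"
  let ?Rc = "map_mat complex_of_real (map_mat Re M)" and ?Jc = "map_mat complex_of_real (map_mat Im M)"
  have cR: "?Rc \<in> carrier_mat m m" "?Jc \<in> carrier_mat m m" "- ?Jc \<in> carrier_mat m m" using M by auto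
  have cI: "?I \<in> carrier_mat m m" "?Z \<in> carrier_mat m m" "\<i> \<cdot>\<^sub>m ?I \<in> carrier_mat m m"
    "(- \<i>) \<cdot>\<^sub>m ?I \<in> carrier_mat m m" by auto
  have cM: "\<i> \<cdot>\<^sub>m M \<in> carrier_mat m m" using M by simp
  have D: "map_mat complex_of_real (realify_mat M) = four_block_mat ?Rc (- ?Jc) ?Jc ?Rc"
    using M unfolding realify_mat_def by (intro eq_matI) (auto simp: index_mat_four_block)
  have PD: "four_block_mat ?I (\<i> \<cdot>\<^sub>m ?I) ?Z ?I * four_block_mat ?Rc (- ?Jc) ?Jc ?Rc
      = four_block_mat M (\<i> \<cdot>\<^sub>m M) ?Jc ?Rc"
  proof -
    have "four_block_mat ?I (\<i> \<cdot>\<^sub>m ?I) ?Z ?I * four_block_mat ?Rc (- ?Jc) ?Jc ?Rc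
      = four_block_mat (?I * ?Rc + (\<i> \<cdot>\<^sub>m ?I) * ?Jc) (?I * (- ?Jc) + (\<i> \<cdot>\<^sub>m ?I) * ?Rc)
          (?Z * ?Rc + ?I * ?Jc) (?Z * (- ?Jc) + ?I * ?Rc)"
      by (rule mult_four_block_mat[OF cI(1,3,2,1) cR(1,3,2,1)])
    moreover have "?Rc + \<i> \<cdot>\<^sub>m ?Jc = M" "- ?Jc + \<i> \<cdot>\<^sub>m ?Rc = \<i> \<cdot>\<^sub>m M" "- ?Z + ?Rc = ?Rc"
      using M by (auto intro!: eq_matI simp: complex_eq_iff)
    ultimately show ?thesis using cR by (simp add: mult_smult_assoc_mat[OF cI(1)])
  qed
  have PDQ: "four_block_mat M (\<i> \<cdot>\<^sub>m M) ?Jc ?Rc * four_block_mat ?I ((- \<i>) \<cdot>\<^sub>m ?I) ?Z ?I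
      = four_block_mat M ?Z ?Jc (map_mat cnj M)"
  proof -
    have "four_block_mat M (\<i> \<cdot>\<^sub>m M) ?Jc ?Rc * four_block_mat ?I ((- \<i>) \<cdot>\<^sub>m ?I) ?Z ?I
      = four_block_mat (M * ?I + (\<i> \<cdot>\<^sub>m M) * ?Z) (M * ((- \<i>) \<cdot>\<^sub>m ?I) + (\<i> \<cdot>\<^sub>m M) * ?I)
          (?Jc * ?I + ?Rc * ?Z) (?Jc * ((- \<i>) \<cdot>\<^sub>m ?I) + ?Rc * ?I)"
      by (rule mult_four_block_mat[OF M cM cR(2,1) cI(1,4,2,1)])
    also have "\<dots> = four_block_mat M (M * ((- \<i>) \<cdot>\<^sub>m ?I) + \<i> \<cdot>\<^sub>m M) ?Jc (?Jc * ((- \<i>) \<cdot>\<^sub>m ?I) + ?Rc)"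
      using M cR cM by simp
    also have "M * ((- \<i>) \<cdot>\<^sub>m ?I) + \<i> \<cdot>\<^sub>m M = ?Z"
      using M by (simp add: mult_smult_distrib[OF M cI(1)]) (intro eq_matI, auto)
    also have "?Jc * ((- \<i>) \<cdot>\<^sub>m ?I) + ?Rc = map_mat cnj M"
      using M by (simp add: mult_smult_distrib[OF cR(2) cI(1)]) (intro eq_matI, auto simp: complex_eq_iff)
    finally show ?thesis .
  qed
  show ?thesis unfolding D PD PDQ ..
qed

lemma det_map_cnj: "det (map_mat cnj M) = cnj (det (M :: complex mat))"
  unfolding det_def by (simp add: cnj_sum cnj_prod)

lemma det_realify_mat:
  fixes M :: "complex mat"
  assumes M: "M \<in> carrier_mat m m"
  shows "det (realify_mat M) = (cmod (det M))^2"
proof -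
  let ?I = "1\<^sub>m m :: complex mat" and ?Z = "0\<^sub>m m m :: complex mat"
  let ?P = "four_block_mat ?I (\<i> \<cdot>\<^sub>m ?I) ?Z ?I" and ?Q = "four_block_mat ?I ((- \<i>) \<cdot>\<^sub>m ?I) ?Z ?I"
  let ?D = "map_mat complex_of_real (realify_mat M)"
  have c: "?P \<in> carrier_mat (m+m) (m+m)" "?Q \<in> carrier_mat (m+m) (m+m)" "?D \<in> carrier_mat (m+m) (m+m)"
    using M by (auto simp: realify_mat_def)
  have "det ?P = 1" "det ?Q = 1"
    by (subst det_four_block_mat_lower_left_zero[of _ m _ m]; simp)+
  hence "complex_of_real (det (realify_mat M)) = det (?P * ?D * ?Q)"
    using c by (simp add: det_mult[OF mult_carrier_mat[OF c(1,3)] c(2)] det_mult[OF c(1,3)]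
        of_real_hom.hom_det)
  also have "\<dots> = det M * det (map_mat cnj M)"
    unfolding realify_mat_similar_block_triangular[OF M]
    by (rule det_four_block_mat_upper_right_zero) (use M in auto)
  also have "\<dots> = complex_of_real ((cmod (det M))^2)"
    by (simp only: det_map_cnj complex_norm_square)
  finally show ?thesis by (simp only: of_real_eq_iff)
qed

definition cmatrix_on :: "(complex^'n) list \<Rightarrow> (complex^'n \<Rightarrow> complex^'n) \<Rightarrow> complex mat" where
  "cmatrix_on us B = Matrix.mat (length us) (length us) (\<lambda>(i,j). cinner (B (us!j)) (us!i))"

lemma det_on_eq_det_cmatrix_on: "det_on B S = det (cmatrix_on (SOME us. c_onb S us) B)"
  unfolding det_on_def Let_def det_nat_eq_det cmatrix_on_def ..

lemma coeff_mat_realify: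
  assumes "\<And>x. B (\<i> *s x) = \<i> *s B x"
  shows "coeff_mat (us @ map (\<lambda>u. \<i> *s u) us) (map B (us @ map (\<lambda>u. \<i> *s u) us))
    = realify_mat (cmatrix_on us B)"
  by (rule eq_matI)
    (auto simp: coeff_mat_def realify_mat_def cmatrix_on_def nth_append inner_eq_Re_cinner
      cinner_scale_left cinner_scale_right assms)

section \<open>The tangent space of the solution variety\<close>

abbreviation charmat :: "complex^'n^'n \<Rightarrow> complex \<Rightarrow> complex^'n^'n" where
  "charmat A l \<equiv> Finite_Cartesian_Product.mat l - A"

definition vcoord :: "complex^'n^'n \<Rightarrow> complex \<Rightarrow> complex^'n \<Rightarrow> complex^'n \<Rightarrow> complex" where
  "vcoord A l v x = cinner (charmat A l *v x) v"

definition lift_vec :: "complex^'n^'n \<Rightarrow> complex \<Rightarrow> complex^'n \<Rightarrow> complex^'n \<Rightarrow> complex^'n" where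
  "lift_vec A l v d = A_lv A l v d + (vcoord A l v d / 2) *s v"

definition horizontal_lift :: "complex^'n^'n \<Rightarrow> complex \<Rightarrow> complex^'n \<Rightarrow> complex^'n
    \<Rightarrow> (complex^'n^'n) \<times> complex \<times> (complex^'n)" where
  "horizontal_lift A l v d = (outer (lift_vec A l v d) v, - (vcoord A l v d / 2), d)"

lemma tangent_V_iff: "(dA, dl, dw) \<in> tangent_V A l v \<longleftrightarrow>
   cinner dw v = 0 \<and> dl *s v - dA *v v + charmat A l *v dw = 0"
  unfolding tangent_V_def by (simp add: matrix_vector_mult_diff_rdistrib mat_mult_vec)

lemma subspace_tangent_V: "subspace (tangent_V A l v)"
  unfolding subspace_def
proof (intro conjI ballI allI)
  show "0 \<in> tangent_V A l v" by (simp add: zero_prod_def tangent_V_iff)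
next
  fix x y assume "x \<in> tangent_V A l v" "y \<in> tangent_V A l v"
  thus "x + y \<in> tangent_V A l v"
    by (cases x; cases y) (auto simp: tangent_V_iff cinner_add_left vector_sadd_rdistrib
        matrix_vector_mult_add_rdistrib matrix_vector_right_distrib algebra_simps)
next
  fix c :: real and x assume "x \<in> tangent_V A l v"
  moreover have "\<And>a b. c *\<^sub>R (a - b) = c *\<^sub>R a - c *\<^sub>R (b :: complex^'n)" by (simp add: algebra_simps)
  ultimately show "c *\<^sub>R x \<in> tangent_V A l v"
    by (cases x) (auto simp: tangent_V_iff cinner_scaleR_left vector_scale_of_real
        matrix_vector_mult_scaleR_left linear_scale[OF matrix_vector_mul_linear]
        simp flip: scaleR_add_right scaleR_diff_right)
qed

lemma linear_tangent_pi: "linear (\<lambda>(dA::complex^'n^'n, dl::complex, dw::complex^'n). dA)"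
  by (rule linearI) (auto simp: split_beta)

lemma linear_tangent_pi2: "linear (\<lambda>(dA::complex^'n^'n, dl::complex, dw::complex^'n). dw)"
  by (rule linearI) (auto simp: split_beta)

lemma outer_if_orthogonal_to_annihilators:
  assumes "cinner v v = 1" and "\<And>Z. Z *v v = 0 \<Longrightarrow> X \<bullet> Z = 0"
  shows "X = outer (X *v v) v"
proof -
  define Z where "Z = X - outer (X *v v) v"
  have "Z *v v = 0" unfolding Z_def by (simp add: matrix_vector_mult_diff_rdistrib outer_mult_vec assms(1))
  hence "X \<bullet> Z = 0" by (rule assms(2))
  moreover have "X \<bullet> Z = Z \<bullet> Z"
    unfolding Z_def by (simp add: inner_diff_left inner_diff_right inner_outer_left inner_outer_right
      matrix_vector_mult_diff_rdistrib outer_mult_vec assms(1))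
  ultimately show ?thesis unfolding Z_def by simp
qed

locale eigentriple =
  fixes A :: "complex^'n^'n" and l :: complex and v :: "complex^'n"
  assumes in_W: "in_W A l v"
begin

lemma cinner_v_v: "cinner v v = 1"
  using in_W unfolding in_W_def in_V_def by (simp add: cinner_self)

lemma A_lv_eq: "A_lv A l v x = charmat A l *v x - vcoord A l v x *s v"
  unfolding A_lv_def proj_perp_def vcoord_def by (simp add: cinner_v_v)

lemma charmat_mult_eq: "charmat A l *v x = A_lv A l v x + vcoord A l v x *s v"
  by (simp add: A_lv_eq)

lemma cinner_A_lv_v: "cinner (A_lv A l v x) v = 0"
  unfolding A_lv_eq by (simp add: cinner_diff_left cinner_scale_left cinner_v_v vcoord_def)

lemma A_lv_in_perp: "A_lv A l v x \<in> perp v"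
  using cinner_A_lv_v unfolding perp_def by simp

lemma vcoord_add: "vcoord A l v (x + y) = vcoord A l v x + vcoord A l v y"
  unfolding vcoord_def by (simp add: matrix_vector_right_distrib cinner_add_left)

lemma vcoord_scaleR: "vcoord A l v (r *\<^sub>R x) = of_real r * vcoord A l v x"
  unfolding vcoord_def by (simp add: linear_scale[OF matrix_vector_mul_linear] cinner_scaleR_left)

lemma vcoord_scale: "vcoord A l v (c *s x) = c * vcoord A l v x"
  unfolding vcoord_def by (simp add: vector_scalar_commute cinner_scale_left)

lemma A_lv_add: "A_lv A l v (x + y) = A_lv A l v x + A_lv A l v y"
  unfolding A_lv_eq by (simp add: matrix_vector_right_distrib vcoord_add vector_sadd_rdistrib algebra_simps)

lemma A_lv_scaleR: "A_lv A l v (r *\<^sub>R x) = r *\<^sub>R A_lv A l v x"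
  unfolding A_lv_eq
  by (simp add: linear_scale[OF matrix_vector_mul_linear] vcoord_scaleR scaleR_conv_of_real[symmetric]
      vector_scale_of_real algebra_simps)

lemma A_lv_scale: "A_lv A l v (c *s x) = c *s A_lv A l v x"
  unfolding A_lv_eq by (simp add: vector_scalar_commute vcoord_scale vector_smult_assoc vector_ssub_ldistrib)

lemma linear_A_lv: "linear (A_lv A l v)"
  by (rule linearI) (simp_all add: A_lv_add A_lv_scaleR)

lemma A_lv_eq_0_imp: assumes "x \<in> perp v" "A_lv A l v x = 0" shows "x = 0"
proof -
  have "inj_on (A_lv A l v) (perp v)" using in_W unfolding in_W_def bij_betw_def by blast
  moreover have "0 \<in> perp v" "A_lv A l v 0 = 0" unfolding perp_def A_lv_eq by (simp_all add: vcoord_def)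
  ultimately show ?thesis using assms by (metis inj_on_contraD)
qed

lemma cinner_lift_vec_v: "cinner (lift_vec A l v d) v = vcoord A l v d / 2"
  unfolding lift_vec_def by (simp add: cinner_add_left cinner_scale_left cinner_A_lv_v cinner_v_v)

lemma horizontal_lift_tangent:
  assumes "d \<in> perp v" shows "horizontal_lift A l v d \<in> tangent_V A l v"
proof -
  have "(- (vcoord A l v d / 2)) *s v - outer (lift_vec A l v d) v *v v + charmat A l *v d = 0"
    unfolding outer_mult_vec cinner_v_v charmat_mult_eq lift_vec_def
    by (simp add: Finite_Cartesian_Product.vec_eq_iff field_simps)
  thus ?thesis using assms unfolding horizontal_lift_def tangent_V_iff perp_def by simp
qed

lemma linear_horizontal_lift: "linear (horizontal_lift A l v)"
proof (rule linearI)
  fix x y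
  have "A_lv A l v (x + y) + (vcoord A l v (x + y) / 2) *s v
      = (A_lv A l v x + (vcoord A l v x / 2) *s v) + (A_lv A l v y + (vcoord A l v y / 2) *s v)"
    by (simp add: A_lv_add vcoord_add vector_sadd_rdistrib add_divide_distrib algebra_simps)
  thus "horizontal_lift A l v (x + y) = horizontal_lift A l v x + horizontal_lift A l v y"
    by (simp add: horizontal_lift_def lift_vec_def vcoord_add outer_add_left add_divide_distrib)
next
  fix r :: real and x
  have "A_lv A l v (r *\<^sub>R x) + (vcoord A l v (r *\<^sub>R x) / 2) *s v
      = r *\<^sub>R (A_lv A l v x + (vcoord A l v x / 2) *s v)"
    by (simp add: A_lv_scaleR vcoord_scaleR Finite_Cartesian_Product.vec_eq_iff vector_scaleR_nth
        scaleR_conv_of_real[where 'a = complex] algebra_simps)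
  thus "horizontal_lift A l v (r *\<^sub>R x) = r *\<^sub>R horizontal_lift A l v x"
    by (simp add: horizontal_lift_def lift_vec_def vcoord_scaleR outer_scaleR_left
        scaleR_conv_of_real[where 'a = complex])
qed

lemma tangent_fibre_iff: "(E, e, 0) \<in> tangent_V A l v \<longleftrightarrow> E *v v = e *s v"
  unfolding tangent_V_iff by (auto simp: algebra_simps)

lemma horizontal_lift_in_kernel_complement:
  assumes "d \<in> perp v"
  shows "horizontal_lift A l v d \<in> kernel_complement (\<lambda>(dA, dl, dw). dw) (tangent_V A l v)"
  unfolding kernel_complement_def
proof (intro CollectI conjI ballI impI)
  show "horizontal_lift A l v d \<in> tangent_V A l v" by (rule horizontal_lift_tangent[OF assms])
next
  fix y assume y: "y \<in> tangent_V A l v" "(case y of (dA, dl, dw) \<Rightarrow> dw) = 0"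
  then obtain E e where yy: "y = (E, e, 0)" by (cases y) auto
  have "E *v v = e *s v" using y(1) unfolding yy tangent_fibre_iff .
  thus "horizontal_lift A l v d \<bullet> y = 0"
    unfolding yy horizontal_lift_def
    by (simp add: inner_outer_left cinner_scale_right cinner_lift_vec_v inner_complex_eq_Re mult.commute)
qed

lemma kernel_complement_pi2_subset:
  assumes x: "x \<in> kernel_complement (\<lambda>(dA, dl, dw). dw) (tangent_V A l v)"
  shows "x \<in> horizontal_lift A l v ` perp v"
proof -
  obtain dA dl dw where xx: "x = (dA, dl, dw)" by (cases x) auto
  have xT: "(dA, dl, dw) \<in> tangent_V A l v" using x xx unfolding kernel_complement_def by simp
  have orth: "dA \<bullet> E + dl \<bullet> e = 0" if "(E, e, 0) \<in> tangent_V A l v" for E e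
    using x that unfolding xx kernel_complement_def by auto
  define y where "y = dA *v v"
  have dA: "dA = outer y v"
    unfolding y_def using orth[of _ 0] by (intro outer_if_orthogonal_to_annihilators cinner_v_v)
      (simp add: tangent_fibre_iff)
  have "Re (cnj e * (cinner y v + dl)) = 0" for e
  proof -
    have "dA \<bullet> outer (e *s v) v + dl \<bullet> e = 0"
      by (rule orth) (simp add: tangent_fibre_iff outer_mult_vec cinner_v_v)
    thus ?thesis unfolding dA
      by (simp add: inner_outer_outer cinner_v_v cinner_scale_right inner_complex_eq_Re algebra_simps)
  qed
  from this[of 1] this[of \<i>] have s0: "cinner y v + dl = 0" by (simp add: complex_eq_iff)
  have "dl *s v - y + charmat A l *v dw = 0" and dwp: "cinner dw v = 0"
    using xT unfolding tangent_V_iff dA by (simp_all add: outer_mult_vec cinner_v_v)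
  hence y_eq: "y = dl *s v + A_lv A l v dw + vcoord A l v dw *s v"
    unfolding charmat_mult_eq by (simp add: algebra_simps)
  hence "cinner y v = dl + vcoord A l v dw"
    by (simp add: cinner_add_left cinner_scale_left cinner_A_lv_v cinner_v_v)
  hence dl: "dl = - (vcoord A l v dw / 2)" using s0 by (auto simp: complex_eq_iff)
  have "y = A_lv A l v dw + (vcoord A l v dw / 2) *s v"
    unfolding y_eq dl by (simp add: Finite_Cartesian_Product.vec_eq_iff field_simps)
  hence "x = horizontal_lift A l v dw" unfolding xx horizontal_lift_def lift_vec_def dA dl by simp
  moreover have "dw \<in> perp v" using dwp unfolding perp_def by simp
  ultimately show ?thesis by blast
qed

lemma kernel_complement_pi2:
  "kernel_complement (\<lambda>(dA, dl, dw). dw) (tangent_V A l v) = horizontal_lift A l v ` perp v"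
  using kernel_complement_pi2_subset horizontal_lift_in_kernel_complement by blast

lemma kernel_pi_trivial:
  assumes "(0, e, w) \<in> tangent_V A l v" shows "e = 0 \<and> w = 0"
proof -
  have wv: "cinner w v = 0" and "e *s v + charmat A l *v w = 0"
    using assms unfolding tangent_V_iff by auto
  hence tv: "e *s v + A_lv A l v w + vcoord A l v w *s v = 0"
    unfolding charmat_mult_eq by (simp add: add.assoc)
  have "cinner (e *s v + A_lv A l v w + vcoord A l v w *s v) v = e + vcoord A l v w"
    by (simp add: cinner_add_left cinner_scale_left cinner_v_v cinner_A_lv_v)
  hence eb: "e + vcoord A l v w = 0" using tv by simp
  have "A_lv A l v w = (e *s v + A_lv A l v w + vcoord A l v w *s v) - (e + vcoord A l v w) *s v"
    by (simp add: vector_sadd_rdistrib algebra_simps)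
  hence "A_lv A l v w = 0" using tv eb by simp
  hence "w = 0" using A_lv_eq_0_imp wv unfolding perp_def by blast
  thus ?thesis using eb by (simp add: vcoord_def)
qed

lemma kernel_complement_pi: "kernel_complement (\<lambda>(dA, dl, dw). dA) (tangent_V A l v) = tangent_V A l v"
  unfolding kernel_complement_def using kernel_pi_trivial by (force simp: zero_prod_def)

end

section \<open>Normal Jacobians at a point of \<open>W\<close>\<close>

locale eigentriple_onb = eigentriple A l v for A :: "complex^'n^'n" and l v +
  fixes us :: "(complex^'n) list"
  assumes c_onb_us: "c_onb (perp v) us"
begin

definition rbasis :: "(complex^'n) list" where
  "rbasis = us @ map (\<lambda>u. \<i> *s u) us"

lemma rbasis: "orthonormal_list rbasis" "set rbasis \<subseteq> perp v" "spans_list (perp v) rbasis"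
  using r_onb_realify[OF c_onb_us complex_subspace_perp] unfolding rbasis_def r_onb_iff by auto

lemma cinner_us_v: "u \<in> set us \<Longrightarrow> cinner u v = 0"
  using c_onb_us unfolding c_onb_def perp_def by auto

lemma cinner_v_us: "u \<in> set us \<Longrightarrow> cinner v u = 0"
  using cinner_us_v by (subst cinner_commute) simp

lemma cinner_v_rbasis: "d \<in> set rbasis \<Longrightarrow> cinner v d = 0"
  using rbasis(2) unfolding perp_def by (subst cinner_commute) auto

definition lifts :: "((complex^'n^'n) \<times> complex \<times> (complex^'n)) list" where
  "lifts = map (horizontal_lift A l v) rbasis"

lemma lifts_subset_span: "horizontal_lift A l v ` perp v \<subseteq> span (set lifts)"
  unfolding lifts_def by (rule linear_image_subset_span_map[OF linear_horizontal_lift rbasis(3)])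

lemma NJ_pi2_eq:
  shows "det (gram lifts) > 0" and "NJ_pi2 A l v = sqrt (1 / det (gram lifts))"
proof -
  have pi2_lifts: "map (\<lambda>(dA, dl, dw). dw) lifts = rbasis"
    unfolding lifts_def by (simp add: horizontal_lift_def map_idI)
  have sub: "set lifts \<subseteq> kernel_complement (\<lambda>(dA, dl, dw). dw) (tangent_V A l v)"
    unfolding kernel_complement_pi2 lifts_def using rbasis(2) by auto
  have span: "kernel_complement (\<lambda>(dA, dl, dw). dw) (tangent_V A l v) \<subseteq> span (set lifts)"
    unfolding kernel_complement_pi2 by (rule lifts_subset_span)
  have indep: "lin_indep_list lifts"
    by (rule lin_indep_list_map_imp[OF linear_tangent_pi2])
      (simp add: pi2_lifts orthonormal_list_lin_indep rbasis(1))
  note NJ = normal_jacobian_eq_gram[OF linear_tangent_pi2 subspace_tangent_V sub span indep]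
  show "det (gram lifts) > 0" by (rule NJ(1))
  show "NJ_pi2 A l v = sqrt (1 / det (gram lifts))"
    using NJ(2) unfolding NJ_pi2_def pi2_lifts gram_orthonormal_list[OF rbasis(1)] by simp
qed

definition ambient_basis :: "(complex^'n) list" where
  "ambient_basis = [v, \<i> *s v] @ rbasis"

lemma orthonormal_ambient_basis: "orthonormal_list ambient_basis"
  unfolding ambient_basis_def
proof (rule orthonormal_list_append[OF _ rbasis(1)])
  show "orthonormal_list [v, \<i> *s v]"
    unfolding orthonormal_list_def
    by (simp add: All_less_Suc numeral_2_eq_2 inner_eq_Re_cinner cinner_scale_left cinner_scale_right
        cinner_v_v)
next
  fix i j assume "i < length [v, \<i> *s v]" "j < length rbasis"
  moreover from this(2) have "cinner v (rbasis!j) = 0" using cinner_v_rbasis nth_mem by blast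
  ultimately show "[v, \<i> *s v] ! i \<bullet> rbasis ! j = 0"
    by (auto simp: less_Suc_eq inner_eq_Re_cinner cinner_scale_left)
qed

lemma spans_ambient_basis: "spans_list UNIV ambient_basis"
  unfolding ambient_basis_def
proof (rule spans_list_append)
  fix x :: "complex^'n"
  define c where "c = cinner x v"
  have "cinner (x - c *s v) v = 0" unfolding c_def by (simp add: cinner_diff_left cinner_scale_left cinner_v_v)
  then obtain r where r: "x - c *s v = (\<Sum>i<length rbasis. r i *\<^sub>R rbasis!i)"
    using rbasis(3) unfolding spans_list_def perp_def by blast
  have "x = Re c *\<^sub>R v + Im c *\<^sub>R (\<i> *s v) + (\<Sum>i<length rbasis. r i *\<^sub>R rbasis!i)"
    unfolding r[symmetric] vector_scale_eq_scaleR[symmetric] by simp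
  also have "Re c *\<^sub>R v + Im c *\<^sub>R (\<i> *s v)
      = (\<Sum>i<length [v, \<i> *s v]. (if i = 0 then Re c else Im c) *\<^sub>R [v, \<i> *s v]!i)"
    by (simp add: numeral_2_eq_2)
  finally have "x = (\<Sum>i<length [v, \<i> *s v]. (if i = 0 then Re c else Im c) *\<^sub>R [v, \<i> *s v]!i)
      + (\<Sum>i<length rbasis. r i *\<^sub>R rbasis!i)" .
  thus "\<exists>a b. x = (\<Sum>i<length [v, \<i> *s v]. a i *\<^sub>R [v, \<i> *s v]!i)
      + (\<Sum>i<length rbasis. b i *\<^sub>R rbasis!i)" by - (intro exI, assumption)
qed

definition eigenvalue_dirs :: "((complex^'n^'n) \<times> complex \<times> (complex^'n)) list" where
  "eigenvalue_dirs = map (\<lambda>e. (outer (e *s v) v, e, 0)) [1, \<i>]"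

definition annihilator_dirs :: "((complex^'n^'n) \<times> complex \<times> (complex^'n)) list" where
  "annihilator_dirs = map (\<lambda>(z, u). (outer z u, 0, 0)) (List.product ambient_basis us)"

definition tangent_basis :: "((complex^'n^'n) \<times> complex \<times> (complex^'n)) list" where
  "tangent_basis = eigenvalue_dirs @ lifts @ annihilator_dirs"

lemma eigenvalue_dir_tangent: "(outer (e *s v) v, e, 0) \<in> tangent_V A l v"
  unfolding tangent_V_iff by (simp add: outer_mult_vec cinner_v_v)

lemma annihilator_dir_tangent: "u \<in> set us \<Longrightarrow> (outer z u, 0, 0) \<in> tangent_V A l v"
  unfolding tangent_V_iff by (simp add: outer_mult_vec cinner_v_us)

lemma set_tangent_basis: "set tangent_basis \<subseteq> tangent_V A l v"
  using rbasis(2) eigenvalue_dir_tangent[of 1, simplified] eigenvalue_dir_tangent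
    annihilator_dir_tangent horizontal_lift_tangent
  unfolding tangent_basis_def eigenvalue_dirs_def annihilator_dirs_def lifts_def
  by (auto simp: set_product)

lemma matrix_expansion: "X = outer (X *v v) v + (\<Sum>k<length us. outer (X *v us!k) (us!k))"
proof (subst matrix_eq, intro allI)
  fix z :: "complex^'n"
  define p where "p = z - cinner z v *s v"
  have p: "p \<in> perp v" unfolding p_def perp_def by (simp add: cinner_diff_left cinner_scale_left cinner_v_v)
  have cp: "cinner p (us!k) = cinner z (us!k)" if "k < length us" for k
    unfolding p_def using cinner_v_us[OF nth_mem[OF that]] by (simp add: cinner_diff_left cinner_scale_left)
  have "(\<Sum>k<length us. outer (X *v us!k) (us!k)) *v z = (\<Sum>k<length us. cinner z (us!k) *s (X *v us!k))"
    by (simp add: matrix_vector_mult_sum_left outer_mult_vec)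
  also have "\<dots> = X *v (\<Sum>k<length us. cinner p (us!k) *s us!k)"
    by (simp add: linear_sum[OF matrix_vector_mul_linear] vector_scalar_commute cp)
  also have "\<dots> = X *v p" by (metis c_onb_expansion[OF c_onb_us p])
  also have "\<dots> = (X - outer (X *v v) v) *v z"
    unfolding p_def by (simp add: matrix_vector_mult_diff_distrib matrix_vector_mult_diff_rdistrib
        outer_mult_vec vector_scalar_commute)
  finally show "X *v z = (outer (X *v v) v + (\<Sum>k<length us. outer (X *v us!k) (us!k))) *v z"
    by (simp add: matrix_vector_mult_add_rdistrib matrix_vector_mult_diff_rdistrib)
qed

lemma annihilator_dir_in_span:
  assumes "u \<in> set us" shows "(outer z u, 0, 0) \<in> span (set tangent_basis)"
proof -
  let ?b = ambient_basis
  have "(outer z u, 0::complex, 0::complex^'n) = (outer (\<Sum>i<length ?b. (z \<bullet> ?b!i) *\<^sub>R ?b!i) u, 0, 0)"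
    by (rule arg_cong[where f = "\<lambda>w. (outer w u, 0::complex, 0::complex^'n)"])
      (rule orthonormal_list_expansion[OF orthonormal_ambient_basis spans_ambient_basis UNIV_I])
  also have "\<dots> = (\<Sum>i<length ?b. (z \<bullet> ?b!i) *\<^sub>R (outer (?b!i) u, 0, 0))"
    by (simp add: outer_sum_left outer_scaleR_left sum_prod)
  also have "\<dots> \<in> span (set tangent_basis)"
    using assms unfolding tangent_basis_def annihilator_dirs_def
    by (intro span_sum span_scale span_base) (force simp: set_product)
  finally show ?thesis .
qed

lemma eigenvalue_dir_in_span: "(outer (e *s v) v, e, 0) \<in> span (set tangent_basis)"
proof -
  have "(outer (e *s v) v, e, 0) = Re e *\<^sub>R (outer (1 *s v) v, 1, 0) + Im e *\<^sub>R (outer (\<i> *s v) v, \<i>, 0)"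
    using vector_scale_eq_scaleR[of e v] by (simp add: outer_add_left outer_scaleR_left complex_eq_iff)
  also have "\<dots> \<in> span (set tangent_basis)"
    by (intro span_add span_scale span_base) (simp_all add: tangent_basis_def eigenvalue_dirs_def)
  finally show ?thesis .
qed

lemma tangent_decomposition:
  assumes T: "(dA, dl, dw) \<in> tangent_V A l v"
  defines "e \<equiv> dl + vcoord A l v dw / 2"
  shows "(dA, dl, dw) = (outer (e *s v) v, e, 0)
    + (\<Sum>k<length us. (outer (dA *v us!k) (us!k), 0, 0)) + horizontal_lift A l v dw"
proof -
  define P where "P = (\<Sum>k<length us. (outer (dA *v us!k) (us!k), 0::complex, 0::complex^'n))"
  define r where "r = (dA, dl, dw) - P - horizontal_lift A l v dw"
  have dw: "dw \<in> perp v" using T unfolding tangent_V_iff perp_def by simp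
  have "P \<in> tangent_V A l v"
    unfolding P_def by (intro subspace_sum[OF subspace_tangent_V] annihilator_dir_tangent) simp
  hence "r \<in> tangent_V A l v"
    unfolding r_def using T horizontal_lift_tangent[OF dw]
    by (intro subspace_diff[OF subspace_tangent_V]) simp_all
  moreover have r_eq: "r = (outer (dA *v v - lift_vec A l v dw) v, e, 0)"
  proof -
    have "dA - (\<Sum>k<length us. outer (dA *v us!k) (us!k)) = outer (dA *v v) v"
      using matrix_expansion[of dA] by (metis add_diff_cancel_right')
    thus ?thesis
      unfolding r_def P_def horizontal_lift_def sum_prod e_def by (simp add: outer_diff_left)
  qed
  ultimately have "outer (dA *v v - lift_vec A l v dw) v *v v = e *s v"
    using tangent_fibre_iff by simp
  hence "dA *v v - lift_vec A l v dw = e *s v" by (simp add: outer_mult_vec cinner_v_v)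
  hence "r = (outer (e *s v) v, e, 0)" using r_eq by simp
  moreover have "(dA, dl, dw) = r + P + horizontal_lift A l v dw" unfolding r_def by simp
  ultimately show ?thesis unfolding P_def by simp
qed

lemma tangent_V_subset_span: "tangent_V A l v \<subseteq> span (set tangent_basis)"
proof
  fix x assume x: "x \<in> tangent_V A l v"
  then obtain dA dl dw where xx: "x = (dA, dl, dw)" by (cases x)
  have "dw \<in> perp v" using x unfolding xx tangent_V_iff perp_def by simp
  hence H: "horizontal_lift A l v dw \<in> span (set tangent_basis)"
    using lifts_subset_span span_mono[of "set lifts" "set tangent_basis"]
    unfolding tangent_basis_def by auto
  have P: "(\<Sum>k<length us. (outer (dA *v us!k) (us!k), 0, 0)) \<in> span (set tangent_basis)"
    by (intro span_sum annihilator_dir_in_span) simp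
  show "x \<in> span (set tangent_basis)"
    unfolding xx tangent_decomposition[OF x[unfolded xx]]
    by (intro span_add eigenvalue_dir_in_span P H)
qed

lemma inner_outer_v_annihilator: "u \<in> set us \<Longrightarrow> outer w v \<bullet> outer z u = 0"
  by (simp add: inner_outer_outer cinner_us_v)

lemma orthogonal_eigenvalue_dirs_lifts: "x \<in> set eigenvalue_dirs \<Longrightarrow> y \<in> set lifts \<Longrightarrow> x \<bullet> y = 0"
proof -
  have c: "cinner v (lift_vec A l v d) = cnj (vcoord A l v d / 2)" for d
    by (subst cinner_commute) (simp add: cinner_lift_vec_v)
  show "x \<in> set eigenvalue_dirs \<Longrightarrow> y \<in> set lifts \<Longrightarrow> x \<bullet> y = 0"
    unfolding eigenvalue_dirs_def lifts_def horizontal_lift_def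
    by (auto simp: inner_outer_outer cinner_v_v inner_complex_eq_Re cinner_scale_left c)
qed

lemma orthogonal_annihilator_dirs:
  "x \<in> set eigenvalue_dirs \<union> set lifts \<Longrightarrow> y \<in> set annihilator_dirs \<Longrightarrow> x \<bullet> y = 0"
  unfolding eigenvalue_dirs_def lifts_def horizontal_lift_def annihilator_dirs_def
  by (auto simp: set_product inner_outer_v_annihilator)

lemma orthonormal_annihilator_matrices:
  "orthonormal_list (map (\<lambda>(z, u). outer z u) (List.product ambient_basis us))"
proof (rule orthonormal_list_map)
  show "distinct (List.product ambient_basis us)"
    using lin_indep_list_distinct[OF orthonormal_list_lin_indep[OF orthonormal_ambient_basis]]
      c_onb_distinct[OF c_onb_us]
    by (simp add: distinct_product)
next
  fix p q assume pq: "p \<in> set (List.product ambient_basis us)" "q \<in> set (List.product ambient_basis us)"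
  obtain z u z' u' where pp: "p = (z, u)" "q = (z', u')" by (cases p; cases q)
  have "z \<in> set ambient_basis" "z' \<in> set ambient_basis" "u \<in> set us" "u' \<in> set us"
    using pq pp by auto
  moreover have "Re (cinner z z') = (if z = z' then 1 else 0)" if "z \<in> set ambient_basis" "z' \<in> set ambient_basis"
    for z z'
    using that orthonormal_ambient_basis lin_indep_list_distinct[OF orthonormal_list_lin_indep]
    unfolding in_set_conv_nth inner_eq_Re_cinner[symmetric]
    by (metis orthonormal_list_inner nth_eq_iff_index_eq)
  ultimately show "(\<lambda>(z, u). outer z u) p \<bullet> (\<lambda>(z, u). outer z u) q = (if p = q then 1 else 0)"
    unfolding pp using c_onb_cinner_mem[OF c_onb_us] by (auto simp: inner_outer_outer)
qed

lemma orthonormal_annihilator_dirs: "orthonormal_list annihilator_dirs"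
  using orthonormal_annihilator_matrices
  unfolding annihilator_dirs_def orthonormal_list_def by (simp add: case_prod_beta)

lemma det_gram_eigenvalue_dirs: "det (gram eigenvalue_dirs) = 4"
proof -
  have "gram eigenvalue_dirs = 2 \<cdot>\<^sub>m 1\<^sub>m 2"
    by (rule eq_matI)
      (auto simp: gram_def eigenvalue_dirs_def less_Suc_eq numeral_2_eq_2 inner_outer_outer cinner_v_v
        cinner_scale_left cinner_scale_right inner_complex_eq_Re)
  thus ?thesis by simp
qed

lemma det_gram_tangent_basis: "det (gram tangent_basis) = 4 * det (gram lifts)"
proof -
  have "det (gram tangent_basis) = det (gram eigenvalue_dirs) * det (gram (lifts @ annihilator_dirs))"
    unfolding tangent_basis_def
    by (rule det_gram_append_orthogonal)
      (auto intro: orthogonal_eigenvalue_dirs_lifts orthogonal_annihilator_dirs)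
  also have "det (gram (lifts @ annihilator_dirs)) = det (gram lifts)"
    using det_gram_append_orthogonal[of lifts annihilator_dirs] orthogonal_annihilator_dirs
    by (simp add: gram_orthonormal_list[OF orthonormal_annihilator_dirs])
  finally show ?thesis by (simp add: det_gram_eigenvalue_dirs)
qed

definition lift_vecs :: "(complex^'n) list" where
  "lift_vecs = [v, \<i> *s v] @ map (lift_vec A l v) rbasis"

lemma det_gram_pi_tangent_basis:
  "det (gram (map (\<lambda>(dA, dl, dw). dA) tangent_basis)) = det (gram lift_vecs)"
proof -
  let ?N = "map (\<lambda>(z, u). outer z u) (List.product ambient_basis us)"
  have pi: "map (\<lambda>(dA, dl, dw). dA) tangent_basis = map (\<lambda>w. outer w v) lift_vecs @ ?N"
    unfolding tangent_basis_def eigenvalue_dirs_def lifts_def horizontal_lift_def annihilator_dirs_def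
      lift_vecs_def
    by (simp add: case_prod_beta)
  have "det (gram (map (\<lambda>w. outer w v) lift_vecs @ ?N))
      = det (gram (map (\<lambda>w. outer w v) lift_vecs)) * det (gram ?N)"
    by (rule det_gram_append_orthogonal) (auto simp: set_product inner_outer_v_annihilator)
  also have "gram (map (\<lambda>w. outer w v) lift_vecs) = gram lift_vecs"
    unfolding gram_def by (intro eq_matI) (auto simp: inner_outer_outer cinner_v_v inner_eq_Re_cinner)
  finally show ?thesis
    unfolding pi by (simp add: gram_orthonormal_list[OF orthonormal_annihilator_matrices])
qed

definition rmatrix :: "real mat" where
  "rmatrix = coeff_mat rbasis (map (A_lv A l v) rbasis)"

lemma coeff_mat_lift_vecs_block_triangular:
  "coeff_mat ambient_basis lift_vecs = four_block_mat (1\<^sub>m 2)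
     (Matrix.mat 2 (length rbasis) (\<lambda>(i,j). lift_vecs!(j+2) \<bullet> ambient_basis!i))
     (0\<^sub>m (length rbasis) 2) rmatrix" (is "_ = four_block_mat _ ?B _ _")
proof -
  let ?n = "length rbasis" and ?b = ambient_basis
  have len: "length ?b = 2 + ?n" "length lift_vecs = 2 + ?n"
    unfolding ambient_basis_def lift_vecs_def by simp_all
  have lift_vec_rbasis: "lift_vec A l v d \<bullet> d' = A_lv A l v d \<bullet> d'" if "d' \<in> set rbasis" for d d'
    using that unfolding lift_vec_def
    by (simp add: inner_eq_Re_cinner cinner_add_left cinner_scale_left cinner_v_rbasis)
  have lv: "lift_vecs!j = ?b!j" if "j < 2" for j
  proof -
    from that consider "j = 0" | "j = 1" by linarith
    thus ?thesis unfolding lift_vecs_def ambient_basis_def by cases simp_all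
  qed
  show ?thesis
  proof (rule eq_matI)
    fix i j assume "i < dim_row (four_block_mat (1\<^sub>m 2) ?B (0\<^sub>m ?n 2) rmatrix)"
      "j < dim_col (four_block_mat (1\<^sub>m 2) ?B (0\<^sub>m ?n 2) rmatrix)"
    hence ij: "i < 2 + ?n" "j < 2 + ?n" by (auto simp: rmatrix_def coeff_mat_def)
    have o: "?b!j \<bullet> ?b!i = (if j = i then 1 else 0)"
      using orthonormal_list_inner[OF orthonormal_ambient_basis] ij len by simp
    show "coeff_mat ?b lift_vecs $$ (i, j) = four_block_mat (1\<^sub>m 2) ?B (0\<^sub>m ?n 2) rmatrix $$ (i, j)"
    proof (cases "i < 2"; cases "j < 2")
      assume "i < 2" "j < 2"
      thus ?thesis using ij o lv by (simp add: coeff_mat_def rmatrix_def len)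
    next
      assume "i < 2" "\<not> j < 2"
      moreover hence "Suc (Suc (j - 2)) = j" by arith
      ultimately show ?thesis using ij by (simp add: coeff_mat_def rmatrix_def len)
    next
      assume "\<not> i < 2" "j < 2"
      thus ?thesis using ij o lv by (simp add: coeff_mat_def rmatrix_def len)
    next
      assume "\<not> i < 2" "\<not> j < 2"
      moreover have "rbasis!(i-2) \<in> set rbasis" using ij \<open>\<not> i < 2\<close> by simp
      ultimately show ?thesis using ij
        by (simp add: coeff_mat_def rmatrix_def len lift_vecs_def ambient_basis_def nth_append
            numeral_2_eq_2 lift_vec_rbasis)
    qed
  qed (auto simp: len coeff_mat_def rmatrix_def)
qed

lemma det_gram_lift_vecs: "det (gram lift_vecs) = (det rmatrix)^2"
proof -
  have len: "length lift_vecs = length ambient_basis"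
    unfolding ambient_basis_def lift_vecs_def by simp
  have "det (coeff_mat ambient_basis lift_vecs) = det rmatrix"
    unfolding coeff_mat_lift_vecs_block_triangular
    by (simp add: det_four_block_mat_lower_left_zero[of _ 2 _ "length rbasis"] rmatrix_def coeff_mat_def)
  thus ?thesis
    using det_gram_change_of_basis[OF orthonormal_ambient_basis spans_ambient_basis _ len] by simp
qed

lemma det_rmatrix_nonzero: "det rmatrix \<noteq> 0"
  unfolding rmatrix_def
proof (rule det_coeff_mat_nonzero[OF rbasis(1,3)])
  show "lin_indep_list (map (A_lv A l v) rbasis)"
    using A_lv_eq_0_imp rbasis(2) orthonormal_list_lin_indep[OF rbasis(1)]
    by (intro lin_indep_list_map[OF linear_A_lv subspace_perp]) auto
qed (auto simp: A_lv_in_perp)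

lemma det_rmatrix: "det rmatrix = (cmod (det (cmatrix_on us (A_lv A l v))))^2"
  unfolding rmatrix_def rbasis_def coeff_mat_realify[where B = "A_lv A l v", OF A_lv_scale]
  by (rule det_realify_mat[of _ "length us"]) (simp add: cmatrix_on_def)

lemma NJ_pi_eq: "NJ_pi A l v = sqrt ((det rmatrix)^2 / (4 * det (gram lifts)))"
proof -
  have "lin_indep_list tangent_basis"
    by (rule lin_indep_list_map_imp[OF linear_tangent_pi], rule lin_indep_list_if_det_gram_nonzero)
      (simp add: det_gram_pi_tangent_basis det_gram_lift_vecs det_rmatrix_nonzero)
  hence "normal_jacobian (\<lambda>(dA, dl, dw). dA) (tangent_V A l v)
      = sqrt (det (gram (map (\<lambda>(dA, dl, dw). dA) tangent_basis)) / det (gram tangent_basis))"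
    by (intro normal_jacobian_eq_gram(2)[OF linear_tangent_pi subspace_tangent_V])
      (simp_all add: kernel_complement_pi set_tangent_basis tangent_V_subset_span)
  thus ?thesis
    unfolding NJ_pi_def det_gram_pi_tangent_basis det_gram_lift_vecs det_gram_tangent_basis .
qed

lemma NJ_ratio: "NJ_pi A l v / NJ_pi2 A l v = 1/2 * (cmod (det (cmatrix_on us (A_lv A l v))))^2"
proof -
  let ?G = "det (gram lifts)"
  have "NJ_pi A l v / NJ_pi2 A l v = sqrt ((det rmatrix)^2 / (4 * ?G) / (1 / ?G))"
    unfolding NJ_pi_eq NJ_pi2_eq(2) real_sqrt_divide ..
  also have "(det rmatrix)^2 / (4 * ?G) / (1 / ?G) = (det rmatrix / 2)^2"
    using NJ_pi2_eq(1) by (simp add: field_simps power2_eq_square)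
  finally show ?thesis by (simp add: det_rmatrix)
qed

end

section \<open>Unitary invariance\<close>

lemma unitary_cadjoint: "unitary U \<Longrightarrow> unitary (cadjoint U)"
  unfolding unitary_def cadjoint_cadjoint by simp

lemma unitary_cancel: "unitary U \<Longrightarrow> cadjoint U *v (U *v x) = x"
  unfolding unitary_def by (simp add: matrix_vector_mul_assoc)

lemma cinner_unitary: "unitary U \<Longrightarrow> cinner (U *v x) (U *v y) = cinner x y"
  by (simp add: cinner_cadjoint unitary_cancel)

lemma perp_unitary_iff:
  assumes "unitary U" shows "y \<in> perp (U *v v) \<longleftrightarrow> cadjoint U *v y \<in> perp v"
proof -
  have "cinner y (U *v v) = cinner (cadjoint U *v y) (cadjoint U *v (U *v v))"
    using cinner_unitary[OF unitary_cadjoint[OF assms]] by simp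
  thus ?thesis unfolding perp_def unitary_cancel[OF assms] by simp
qed

lemma charmat_conj:
  "unitary U \<Longrightarrow> charmat (U ** A ** cadjoint U) l *v (U *v x) = U *v (charmat A l *v x)"
  by (simp add: matrix_vector_mult_diff_rdistrib matrix_vector_mult_diff_distrib mat_mult_vec
      vector_scalar_commute unitary_cancel matrix_vector_mul_assoc[symmetric])

lemma A_lv_conj:
  "unitary U \<Longrightarrow> A_lv (U ** A ** cadjoint U) l (U *v v) (U *v x) = U *v A_lv A l v x"
  unfolding A_lv_def proj_perp_def
  by (simp add: charmat_conj cinner_unitary matrix_vector_mult_diff_distrib vector_scalar_commute)

lemma bij_betw_unitary_perp:
  assumes "unitary U" shows "bij_betw ((*v) U) (perp v) (perp (U *v v))"
  using unitary_cancel[OF assms] unitary_cancel[OF unitary_cadjoint[OF assms]] perp_unitary_iff[OF assms]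
  by (intro bij_betw_byWitness[where f' = "(*v) (cadjoint U)"]) (auto simp: cadjoint_cadjoint)

lemma in_W_conj:
  assumes U: "unitary U" and W: "in_W A l v"
  shows "in_W (U ** A ** cadjoint U) l (U *v v)"
proof -
  have "of_real ((norm (U *v v))^2) = (of_real ((norm v)^2) :: complex)"
    unfolding cinner_self[symmetric] cinner_unitary[OF U] ..
  hence "(norm (U *v v))^2 = (norm v)^2" by (simp only: of_real_eq_iff)
  hence "norm (U *v v) = norm v" by (rule power2_eq_imp_eq) simp_all
  hence "norm (U *v v) = 1" using W unfolding in_W_def in_V_def by simp
  moreover have "charmat (U ** A ** cadjoint U) l *v (U *v v) = 0"
    using W unfolding charmat_conj[OF U] in_W_def in_V_def by simp
  moreover have "bij_betw (A_lv (U ** A ** cadjoint U) l (U *v v)) (perp (U *v v)) (perp (U *v v))"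
  proof -
    have "bij_betw ((*v) (cadjoint U)) (perp (U *v v)) (perp v)"
      using bij_betw_unitary_perp[OF unitary_cadjoint[OF U], of "U *v v"] unfolding unitary_cancel[OF U] .
    moreover have "bij_betw (A_lv A l v) (perp v) (perp v)" using W unfolding in_W_def by blast
    ultimately have "bij_betw ((*v) U \<circ> (A_lv A l v \<circ> (*v) (cadjoint U))) (perp (U *v v)) (perp (U *v v))"
      by (rule bij_betw_trans[OF bij_betw_trans bij_betw_unitary_perp[OF U]])
    moreover have "((*v) U \<circ> (A_lv A l v \<circ> (*v) (cadjoint U))) y = A_lv (U ** A ** cadjoint U) l (U *v v) y"
      for y
      using A_lv_conj[OF U, of A l v "cadjoint U *v y"]
        unitary_cancel[OF unitary_cadjoint[OF U]] by (simp add: cadjoint_cadjoint)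
    ultimately show ?thesis
      by (metis (no_types, lifting) bij_betw_cong)
  qed
  ultimately show ?thesis unfolding in_W_def in_V_def by simp
qed

lemma c_onb_unitary:
  assumes U: "unitary U" and us: "c_onb (perp (U *v v)) us"
  shows "c_onb (perp v) (map ((*v) (cadjoint U)) us)"
  unfolding c_onb_def
proof (intro conjI allI impI ballI)
  fix i j assume "i < length (map ((*v) (cadjoint U)) us)" "j < length (map ((*v) (cadjoint U)) us)"
  thus "cinner (map ((*v) (cadjoint U)) us ! i) (map ((*v) (cadjoint U)) us ! j) = (if i = j then 1 else 0)"
    using c_onb_cinner[OF us] by (simp add: cinner_unitary[OF unitary_cadjoint[OF U]])
next
  show "set (map ((*v) (cadjoint U)) us) \<subseteq> perp v"
    using us perp_unitary_iff[OF U] unfolding c_onb_def by auto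
next
  fix x assume "x \<in> perp v"
  hence "U *v x \<in> perp (U *v v)" by (simp add: perp_unitary_iff[OF U] unitary_cancel[OF U])
  then obtain c where c: "U *v x = (\<Sum>i<length us. c i *s us!i)" using us unfolding c_onb_def by blast
  have "x = cadjoint U *v (U *v x)" by (simp add: unitary_cancel[OF U])
  also have "\<dots> = (\<Sum>i<length us. c i *s (cadjoint U *v us!i))"
    unfolding c by (simp add: linear_sum[OF matrix_vector_mul_linear] vector_scalar_commute)
  finally show "\<exists>c. x = (\<Sum>i<length (map ((*v) (cadjoint U)) us). c i *s map ((*v) (cadjoint U)) us ! i)"
    by (intro exI[of _ c]) simp
qed

lemma cmatrix_on_conj:
  assumes "unitary U"
  shows "cmatrix_on (map ((*v) (cadjoint U)) us) (A_lv A l v) = cmatrix_on us (A_lv (U ** A ** cadjoint U) l (U *v v))"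
proof -
  have "A_lv (U ** A ** cadjoint U) l (U *v v) y = U *v A_lv A l v (cadjoint U *v y)" for y
    using A_lv_conj[OF assms, of A l v "cadjoint U *v y"]
      unitary_cancel[OF unitary_cadjoint[OF assms]] by (simp add: cadjoint_cadjoint)
  thus ?thesis unfolding cmatrix_on_def by (intro eq_matI) (auto simp: cinner_cadjoint)
qed

lemma NJ_ratio_cmatrix_on:
  assumes "in_W A l v" "c_onb (perp v) us"
  shows "NJ_pi A l v / NJ_pi2 A l v = 1/2 * (cmod (det (cmatrix_on us (A_lv A l v))))^2"
  using assms by (intro eigentriple_onb.NJ_ratio eigentriple_onb.intro eigentriple.intro
      eigentriple_onb_axioms.intro)

lemma c_onb_perp_some: "c_onb (perp v) (SOME us. c_onb (perp v) us)"
  using c_onb_exists[OF complex_subspace_perp] by (rule someI_ex)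

theorem mainTheorem13:
  fixes A :: "complex^'n^'n" and l :: complex and v :: "complex^'n"
  assumes "in_W A l v"
  shows "NJ_pi A l v / NJ_pi2 A l v = 1/2 * (cmod (det_on (A_lv A l v) (perp v)))^2
         \<and> (\<forall>U. unitary U \<longrightarrow>
              NJ_pi (U ** A ** cadjoint U) l (U *v v) / NJ_pi2 (U ** A ** cadjoint U) l (U *v v)
              = NJ_pi A l v / NJ_pi2 A l v)"
proof (intro conjI allI impI)
  show "NJ_pi A l v / NJ_pi2 A l v = 1/2 * (cmod (det_on (A_lv A l v) (perp v)))^2"
    unfolding det_on_eq_det_cmatrix_on by (rule NJ_ratio_cmatrix_on[OF assms c_onb_perp_some])
next
  fix U :: "complex^'n^'n" assume U: "unitary U"
  let ?us = "SOME us. c_onb (perp (U *v v)) us"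
  have "NJ_pi (U ** A ** cadjoint U) l (U *v v) / NJ_pi2 (U ** A ** cadjoint U) l (U *v v)
      = 1/2 * (cmod (det (cmatrix_on ?us (A_lv (U ** A ** cadjoint U) l (U *v v)))))^2"
    by (rule NJ_ratio_cmatrix_on[OF in_W_conj[OF U assms] c_onb_perp_some])
  also have "\<dots> = 1/2 * (cmod (det (cmatrix_on (map ((*v) (cadjoint U)) ?us) (A_lv A l v))))^2"
    unfolding cmatrix_on_conj[OF U] ..
  also have "\<dots> = NJ_pi A l v / NJ_pi2 A l v"
    by (rule NJ_ratio_cmatrix_on[OF assms c_onb_unitary[OF U c_onb_perp_some], symmetric])
  finally show "NJ_pi (U ** A ** cadjoint U) l (U *v v) / NJ_pi2 (U ** A ** cadjoint U) l (U *v v)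
      = NJ_pi A l v / NJ_pi2 A l v" .
qed

end
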